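(* Let $r:\mathbb Z\to\mathbb C$ be any function and $p\ge1$ an integer. Define $R(k)=r(k)r(k-1)\cdots r(k-p+1)$ and, for $m=1,\dots,p$, $r^{(m)}(k)=R(kp+m-1)$ for $k\in\mathbb Z$. Then for every $n\in\mathbb Z$ and every $i\in\{1,\dots,p\}$ one has, as an identity of formal power series in $\mathbf t=(t_1,t_2,\dots)$ and $\mathbf t^*=(t^*_1,t^*_2,\dots)$, $$\tau_r\big(np+i,\mathbf t^{[p]},\mathbf t^{*[p]}\big)=\prod_{m=1}^{i}\tau_{r^{(m)}}(n+1,\mathbf t,\mathbf t^* )\prod_{m=i+1}^{p}\tau_{r^{(m)}}(n,\mathbf t,\mathbf t^* ).$$
   Context: For a function $\rho:\mathbb Z\to\mathbb C$, a partition $\lambda$ and $x\in\mathbb Z$, set $\rho_\lambda(x)=\prod_{(i,j)\in\lambda}\rho(x+j-i)$, the product over the boxes $(i,j)$ ($1\le j\le\lambda_i$) of the Young diagram, with $\rho_0=1$. Schur functions: $\exp(\sum_{m\ge1}t_mz^m)=\sum_{k\ge0}h_k(\mathbf t)z^k$, $h_k=0$ for $k<0$, $s_\lambda(\mathbf t)=\det(h_{\lambda_i-i+j}(\mathbf t))_{1\le i,j\le\ell(\lambda)}$. The hypergeometric tau function is $\tau_\rho(N,\mathbf t,\mathbf t^* )=\sum_\lambda \rho_\lambda(N)s_\lambda(\mathbf t)s_\lambda(\mathbf t^* )$, summed over all partitions (a formal power series in $\mathbf t,\mathbf t^*$). For $\mathbf t=(t_1,t_2,\dots)$, $\mathbf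 t^{[p]}$ denotes the sequence whose $(kp)$-th entry is $t_k$ for $k\ge1$ and whose other entries are $0$, i.e. $\mathbf t^{[p]}=(0,\dots,0,t_1,0,\dots,0,t_2,0,\dots)$ with blocks of length $p$; similarly for $\mathbf t^{*[p]}$. *)

theory Defs
  imports
    "HOL-Library.Poly_Mapping"
    "HOL-Analysis.Infinite_Sum"
    "HOL-Computational_Algebra.Formal_Power_Series"
    "Jordan_Normal_Form.Determinant"
begin

text \<open>Variables: Inl k stands for t_k, Inr k for t*_k (k >= 1).\<close>

type_synonym var = "nat + nat"
type_synonym monom = "var \<Rightarrow>\<^sub>0 nat"
type_synonym mpoly = "monom \<Rightarrow>\<^sub>0 complex"
type_synonym mser = "monom \<Rightarrow> complex"

definition pvar :: "var \<Rightarrow> mpoly" where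
  "pvar v = Poly_Mapping.single (Poly_Mapping.single v 1) 1"

definition pconst :: "complex \<Rightarrow> mpoly" where
  "pconst c = Poly_Mapping.single 0 c"

text \<open>The sequences t = (t_1,t_2,...) and t* (index 0 unused).\<close>
definition tseq :: "nat \<Rightarrow> mpoly" where "tseq k = pvar (Inl k)"
definition tsseq :: "nat \<Rightarrow> mpoly" where "tsseq k = pvar (Inr k)"

text \<open>t^[p]: the (kp)-th entry is t_k, all other entries are 0.\<close>
definition dilate :: "nat \<Rightarrow> (nat \<Rightarrow> mpoly) \<Rightarrow> nat \<Rightarrow> mpoly" where
  "dilate p a n = (if 0 < n \<and> p dvd n then a (n div p) else 0)"

definition gen_series :: "(nat \<Rightarrow> mpoly) \<Rightarrow> mpoly fps" where
  "gen_series a = Abs_fps (\<lambda>m. if m = 0 then 0 else a m)"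

text \<open>h_k(a) = [z^k] exp(sum_{m>=1} a_m z^m) = [z^k] sum_{n>=0} S^n/n!;
  since S has zero constant term, only n <= k contribute.\<close>
definition hcomp :: "(nat \<Rightarrow> mpoly) \<Rightarrow> nat \<Rightarrow> mpoly" where
  "hcomp a k = (\<Sum>n\<le>k. pconst (inverse (fact n)) * fps_nth (gen_series a ^ n) k)"

definition hZ :: "(nat \<Rightarrow> mpoly) \<Rightarrow> int \<Rightarrow> mpoly" where
  "hZ a k = (if k < 0 then 0 else hcomp a (nat k))"

text \<open>A partition is a weakly decreasing list of positive integers; lambda_i = l ! (i-1).\<close>
definition is_partition :: "nat list \<Rightarrow> bool" where
  "is_partition l \<longleftrightarrow> sorted_wrt (\<ge>) l \<and> 0 \<notin> set l"

text \<open>s_lambda(a) = det (h_{lambda_i - i + j}(a))_{1<=i,j<=ell(lambda)} (0-based indices here).\<close>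
definition schur :: "nat list \<Rightarrow> (nat \<Rightarrow> mpoly) \<Rightarrow> mpoly" where
  "schur l a = det (mat (length l) (length l)
      (\<lambda>(i, j). hZ a (int (l ! i) - int i + int j)))"

definition rho_part :: "(int \<Rightarrow> complex) \<Rightarrow> nat list \<Rightarrow> int \<Rightarrow> complex" where
  "rho_part \<rho> l x = (\<Prod>i<length l. \<Prod>j<l ! i. \<rho> (x + int j - int i))"

definition tau :: "(int \<Rightarrow> complex) \<Rightarrow> int \<Rightarrow> (nat \<Rightarrow> mpoly) \<Rightarrow> (nat \<Rightarrow> mpoly) \<Rightarrow> mser" where
  "tau \<rho> N a b = (\<lambda>m. infsum (\<lambda>l. rho_part \<rho> l N * Poly_Mapping.lookup (schur l a * schur l b) m)
                               {l. is_partition l})"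

definition ser_mult :: "mser \<Rightarrow> mser \<Rightarrow> mser" where
  "ser_mult f g = (\<lambda>m. \<Sum>(x, y) \<in> {(x, y). x + y = m}. f x * g y)"

definition ser_one :: mser where
  "ser_one = (\<lambda>m. if m = 0 then 1 else 0)"

definition ser_prod :: "(nat \<Rightarrow> mser) \<Rightarrow> nat list \<Rightarrow> mser" where
  "ser_prod F ms = foldr (\<lambda>m acc. ser_mult (F m) acc) ms ser_one"

definition Rfun :: "(int \<Rightarrow> complex) \<Rightarrow> nat \<Rightarrow> int \<Rightarrow> complex" where
  "Rfun r p k = (\<Prod>j<p. r (k - int j))"

definition rsup :: "(int \<Rightarrow> complex) \<Rightarrow> nat \<Rightarrow> nat \<Rightarrow> int \<Rightarrow> complex" where
  "rsup r p m k = Rfun r p (k * int p + int m - 1)"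

end

theory Submission
  imports Defs
begin

(* Fix L = p K. A partition l with at most L parts is encoded by its beta numbers
  l_j + (L - 1 - j) + i, which for the empty partition are i, ..., i + L - 1. Because
  h_k(t^[p]) vanishes unless p divides k, the Jacobi-Trudi determinant of s_l(t^[p]) vanishes
  unless every residue class mod p contains exactly K beta numbers of l. Such balanced
  partitions correspond bijectively to p-tuples (mu_c) of partitions (their p-quotients, read
  off an abacus with p runners), and after reordering rows and columns the determinant of a
  balanced partition becomes block diagonal, so s_l(t^[p]) = +-(prod_c s_(mu_c)(t)); the sign
  cancels in s_l(t^[p]) s_l(t*^[p]). The content product rho_l(N) is a product of values of r
  over the intervals between the beta numbers of the empty partition and those of l; grouping
  these intervals runner by runner turns it into the product of the content products of the
  mu_c for the functions r^(c+1), at n + 1 on the first i runners and at n on the others.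
  Comparing the two sides coefficient by coefficient, where only finitely many partitions
  contribute, gives the identity. *)

lemma finite_splittings:
  fixes m :: "'a \<Rightarrow>\<^sub>0 nat"
  shows "finite {(x, y). x + y = m}"
proof -
  let ?f = "\<lambda>x. restrict (Poly_Mapping.lookup x) (Poly_Mapping.keys m)"
  let ?A = "{x. \<exists>y. x + y = m}"
  have sub: "?f ` ?A \<subseteq> PiE (Poly_Mapping.keys m) (\<lambda>v. {0..Poly_Mapping.lookup m v})"
    by (auto simp: Poly_Mapping.lookup_add)
  have inj: "inj_on ?f ?A"
  proof (rule inj_onI, rule poly_mapping_eqI)
    fix x1 x2 v assume x1: "x1 \<in> ?A" and x2: "x2 \<in> ?A" and eq: "?f x1 = ?f x2"
    show "Poly_Mapping.lookup x1 v = Poly_Mapping.lookup x2 v"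
    proof (cases "v \<in> Poly_Mapping.keys m")
      case True
      then show ?thesis using fun_cong[OF eq, of v] by simp
    next
      case False
      then have "Poly_Mapping.lookup m v = 0"
        by (simp add: in_keys_iff)
      moreover obtain y1 y2 where "x1 + y1 = m" "x2 + y2 = m"
        using x1 x2 by blast
      ultimately show ?thesis
        by (metis add_is_0 Poly_Mapping.lookup_add)
    qed
  qed
  have "finite ?A"
    by (rule finite_imageD[OF finite_subset[OF sub] inj]) (auto intro!: finite_PiE)
  moreover have "{(x, y). x + y = m} \<subseteq> (\<lambda>x. (x, m - x)) ` ?A"
    by (auto simp: image_def)
  ultimately show ?thesis
    by (meson finite_imageI finite_subset)
qed

lemma lookup_times_splittings:
  fixes P Q :: "('a \<Rightarrow>\<^sub>0 nat) \<Rightarrow>\<^sub>0 'b::comm_semiring_0"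
  shows "Poly_Mapping.lookup (P * Q) m
       = (\<Sum>(x, y) \<in> {(x, y). x + y = m}. Poly_Mapping.lookup P x * Poly_Mapping.lookup Q y)"
proof -
  let ?D = "{(x, y). x + y = m}"
  let ?g = "\<lambda>x y. Poly_Mapping.lookup P x * Poly_Mapping.lookup Q y when m = x + y"
  have "Poly_Mapping.lookup (P * Q) m = (\<Sum>x. \<Sum>y. ?g x y)"
    by (simp add: Poly_Mapping.lookup_mult Sum_any_right_distrib mult_when)
  also have "\<dots> = (\<Sum>(x, y). ?g x y)"
  proof (rule Sum_any.cartesian_product[of "fst ` ?D \<times> snd ` ?D"])
    show "finite (fst ` ?D \<times> snd ` ?D)"
      using finite_splittings[of m] by blast
  qed (auto simp: image_def when_def)
  also have "\<dots> = (\<Sum>(x, y) \<in> ?D. ?g x y)"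
    by (rule Sum_any.expand_superset)
       (use finite_splittings[of m] in \<open>auto simp: when_def split: if_splits\<close>)
  also have "\<dots> = (\<Sum>(x, y) \<in> ?D. Poly_Mapping.lookup P x * Poly_Mapping.lookup Q y)"
    by (rule sum.cong) (auto simp: when_def)
  finally show ?thesis .
qed

lemma pconst_1 [simp]: "pconst 1 = 1"
  unfolding pconst_def by (simp add: one_poly_mapping.abs_eq single.abs_eq when_def)

lemma pconst_mult: "pconst a * pconst b = pconst (a * b)"
  unfolding pconst_def by (simp add: mult_single)

lemma prod_pconst: "(\<Prod>c\<in>A. pconst (f c)) = pconst (\<Prod>c\<in>A. f c)"
  by (induction A rule: infinite_finite_induct) (simp_all add: pconst_mult)

lemma lookup_pconst_mult: "Poly_Mapping.lookup (pconst c * P) x = c * Poly_Mapping.lookup P x"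
proof -
  have "pconst c * P = Poly_Mapping.map ((*) c) P"
    unfolding pconst_def by (simp add: mult_map_scale_conv_mult)
  then show ?thesis
    by (simp add: Poly_Mapping.map.rep_eq when_def)
qed

definition wdeg :: "('a \<Rightarrow> nat) \<Rightarrow> ('a \<Rightarrow>\<^sub>0 nat) \<Rightarrow> nat" where
  "wdeg w x = (\<Sum>v\<in>Poly_Mapping.keys x. w v * Poly_Mapping.lookup x v)"

lemma wdeg_add: "wdeg w (x + y) = wdeg w x + wdeg w y"
  unfolding wdeg_def by (rule setsum_keys_plus_distrib) (auto simp: algebra_simps)

lemma wdeg_scale: "wdeg (\<lambda>v. p * w v) x = p * wdeg w x"
  unfolding wdeg_def by (simp add: sum_distrib_left mult.assoc)

definition agrees_upto :: "(var \<Rightarrow> nat) \<Rightarrow> nat \<Rightarrow> mser \<Rightarrow> mpoly \<Rightarrow> bool" where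
  "agrees_upto w D F P \<longleftrightarrow> (\<forall>x. wdeg w x \<le> D \<longrightarrow> F x = Poly_Mapping.lookup P x)"

lemma agrees_upto_ser_mult:
  assumes "agrees_upto w D F P" and "agrees_upto w D G Q"
  shows "agrees_upto w D (ser_mult F G) (P * Q)"
  unfolding agrees_upto_def
proof (intro allI impI)
  fix m assume m: "wdeg w m \<le> D"
  have "F x * G y = Poly_Mapping.lookup P x * Poly_Mapping.lookup Q y" if "x + y = m" for x y
    using assms m that wdeg_add[of w x y] unfolding agrees_upto_def by simp
  then show "ser_mult F G m = Poly_Mapping.lookup (P * Q) m"
    unfolding ser_mult_def lookup_times_splittings by (intro sum.cong) auto
qed

lemma agrees_upto_ser_prod:
  assumes "\<And>j. j \<in> set ms \<Longrightarrow> agrees_upto w D (F j) (P j)"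
  shows "agrees_upto w D (ser_prod F ms) (prod_list (map P ms))"
  using assms
proof (induction ms)
  case Nil
  then show ?case
    by (simp add: agrees_upto_def ser_prod_def ser_one_def lookup_one when_def)
next
  case (Cons j ms)
  then show ?case
    using agrees_upto_ser_mult[of w D "F j" "P j"] by (simp add: ser_prod_def)
qed

definition homog :: "(var \<Rightarrow> nat) \<Rightarrow> mpoly \<Rightarrow> int \<Rightarrow> bool" where
  "homog w P d \<longleftrightarrow> (\<forall>x\<in>Poly_Mapping.keys P. int (wdeg w x) = d)"

lemma homog_0 [simp]: "homog w 0 d"
  unfolding homog_def by simp

lemma homog_1 [simp]: "homog w 1 0"
  unfolding homog_def by (simp add: wdeg_def)

lemma homog_add: "homog w P d \<Longrightarrow> homog w Q d \<Longrightarrow> homog w (P + Q) d"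
  unfolding homog_def using Poly_Mapping.keys_add[of P Q] by auto

lemma homog_uminus: "homog w P d \<Longrightarrow> homog w (- P) d"
  unfolding homog_def by (simp add: in_keys_iff)

lemma homog_sum: "(\<And>i. i \<in> I \<Longrightarrow> homog w (f i) d) \<Longrightarrow> homog w (sum f I) d"
  by (induction I rule: infinite_finite_induct) (simp_all add: homog_add)

lemma homog_mult: "homog w P d \<Longrightarrow> homog w Q e \<Longrightarrow> homog w (P * Q) (d + e)"
  unfolding homog_def using keys_mult[of P Q] by (fastforce simp: wdeg_add)

lemma homog_prod:
  "finite I \<Longrightarrow> (\<And>i. i \<in> I \<Longrightarrow> homog w (f i) (d i)) \<Longrightarrow> homog w (prod f I) (sum d I)"
  by (induction I rule: finite_induct) (simp_all add: homog_mult)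

lemma homog_pconst_mult: "homog w P d \<Longrightarrow> homog w (pconst c * P) d"
  unfolding homog_def by (metis in_keys_iff lookup_pconst_mult mult_zero_right)

lemma homog_signof_mult: "homog w P d \<Longrightarrow> homog w (signof p * P) d"
  by (cases "sign p = 1") (auto simp: sign_def homog_uminus)

lemma homog_lookup_nonzero:
  "homog w P d \<Longrightarrow> Poly_Mapping.lookup P x \<noteq> 0 \<Longrightarrow> int (wdeg w x) = d"
  unfolding homog_def by (auto simp: in_keys_iff)

lemma homog_pvar: "homog w (pvar v) (int (w v))"
  unfolding homog_def pvar_def wdeg_def by simp

section \<open>Determinants\<close>

lemma det_mat_leibniz:
  "det (mat n n (\<lambda>(i, j). f i j))
     = (\<Sum>s | s permutes {0..<n}. signof s * (\<Prod>i = 0..<n. f i (s i)))"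
  unfolding det_def
  by (auto intro!: sum.cong prod.cong simp: permutes_in_image)

lemma det_mat_eq_0:
  assumes "\<And>s. s permutes {0..<n} \<Longrightarrow> \<exists>i<n. f i (s i) = 0"
  shows "det (mat n n (\<lambda>(i, j). f i j)) = 0"
  unfolding det_mat_leibniz
proof (rule sum.neutral, intro ballI)
  fix s assume "s \<in> {s. s permutes {0..<n}}"
  then obtain i where "i < n" "f i (s i) = 0"
    using assms by auto
  then have "(\<Prod>i = 0..<n. f i (s i)) = 0"
    by (intro prod_zero) auto
  then show "signof s * (\<Prod>i = 0..<n. f i (s i)) = 0"
    by simp
qed

lemma det_mat_permute_rows:
  assumes s: "s permutes {0..<n}"
  shows "det (mat n n (\<lambda>(i, j). f (s i) j)) = signof s * det (mat n n (\<lambda>(i, j). f i j))"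
proof -
  have "mat n n (\<lambda>(i, j). f (s i) j) = mat n n (\<lambda>(i, j). mat n n (\<lambda>(i, j). f i j) $$ (s i, j))"
    by (rule eq_matI) (use permutes_in_image[OF s] in auto)
  then show ?thesis
    using det_permute_rows[OF _ s, of "mat n n (\<lambda>(i, j). f i j)"] by simp
qed

lemma det_mat_transpose: "det (mat n n (\<lambda>(i, j). f j i)) = det (mat n n (\<lambda>(i, j). f i j))"
proof -
  have "mat n n (\<lambda>(i, j). f j i) = transpose_mat (mat n n (\<lambda>(i, j). f i j))"
    by (rule eq_matI) auto
  then show ?thesis
    using det_transpose[of "mat n n (\<lambda>(i, j). f i j)" n] by simp
qed

lemma det_mat_permute_cols:
  assumes s: "s permutes {0..<n}"
  shows "det (mat n n (\<lambda>(i, j). f i (s j))) = signof s * det (mat n n (\<lambda>(i, j). f i j))"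
  using det_mat_transpose[of n "\<lambda>i j. f j (s i)"] det_mat_transpose[of n f]
    det_mat_permute_rows[OF s, of "\<lambda>i j. f j i"]
  by simp

lemma bij_betw_permutes_factor:
  fixes e e' :: "nat \<Rightarrow> 'a"
  assumes e: "bij_betw e {0..<n} U" and e': "bij_betw e' {0..<n} U"
  obtains s where "s permutes {0..<n}" and "\<And>i. i < n \<Longrightarrow> e' i = e (s i)"
proof
  let ?s = "\<lambda>i. if i < n then the_inv_into {0..<n} e (e' i) else i"
  have "bij_betw (the_inv_into {0..<n} e \<circ> e') {0..<n} {0..<n}"
    using bij_betw_trans[OF e' bij_betw_the_inv_into[OF e]] .
  moreover have "bij_betw ?s {0..<n} {0..<n} = bij_betw (the_inv_into {0..<n} e \<circ> e') {0..<n} {0..<n}"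
    by (rule bij_betw_cong) auto
  ultimately show "?s permutes {0..<n}"
    by (intro bij_imp_permutes) auto
  show "e' i = e (?s i)" if "i < n" for i
    using that e bij_betwE[OF e'] by (simp add: f_the_inv_into_f_bij_betw)
qed

text \<open>The two sign factors produced by reindexing rows and columns appear in both
  determinants and hence cancel.\<close>

lemma det_mult_det_reindex:
  fixes F G :: "'b \<Rightarrow> 'c \<Rightarrow> 'a::comm_ring_1"
  assumes e: "bij_betw e {0..<n} U" and e': "bij_betw e' {0..<n} U"
    and g: "bij_betw g {0..<n} V" and g': "bij_betw g' {0..<n} V"
  shows "det (mat n n (\<lambda>(i, j). F (e' i) (g' j))) * det (mat n n (\<lambda>(i, j). G (e' i) (g' j)))
       = det (mat n n (\<lambda>(i, j). F (e i) (g j))) * det (mat n n (\<lambda>(i, j). G (e i) (g j)))"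
proof -
  obtain q where q: "q permutes {0..<n}" "\<And>i. i < n \<Longrightarrow> e' i = e (q i)"
    using bij_betw_permutes_factor[OF e e'] by blast
  obtain r where r: "r permutes {0..<n}" "\<And>i. i < n \<Longrightarrow> g' i = g (r i)"
    using bij_betw_permutes_factor[OF g g'] by blast
  have reindex: "det (mat n n (\<lambda>(i, j). H (e' i) (g' j)))
      = signof q * signof r * det (mat n n (\<lambda>(i, j). H (e i) (g j)))" for H :: "'b \<Rightarrow> 'c \<Rightarrow> 'a"
  proof -
    have "mat n n (\<lambda>(i, j). H (e' i) (g' j)) = mat n n (\<lambda>(i, j). H (e (q i)) (g (r j)))"
      by (rule eq_matI) (auto simp: q r)
    then show ?thesis
      using det_mat_permute_rows[OF q(1), of "\<lambda>i j. H (e i) (g (r j))"]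
        det_mat_permute_cols[OF r(1), of "\<lambda>i j. H (e i) (g j)"]
      by simp
  qed
  have "(signof q * signof q) * (signof r * signof r) = (1::'a)"
    by (simp add: sign_def)
  moreover have "(signof q * signof r * det (mat n n (\<lambda>(i, j). F (e i) (g j))))
        * (signof q * signof r * det (mat n n (\<lambda>(i, j). G (e i) (g j))))
      = ((signof q * signof q) * (signof r * signof r))
        * (det (mat n n (\<lambda>(i, j). F (e i) (g j))) * det (mat n n (\<lambda>(i, j). G (e i) (g j))))"
    by (simp add: ac_simps)
  ultimately show ?thesis
    unfolding reindex[of F] reindex[of G] by simp
qed

definition perm_sum :: "nat \<Rightarrow> (nat \<Rightarrow> nat) \<Rightarrow> (nat \<Rightarrow> nat) \<Rightarrow> nat \<Rightarrow> nat" where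
  "perm_sum n1 a b x = (if x < n1 then a x else n1 + b (x - n1))"

lemma perm_sum_shift:
  assumes b: "b permutes {0..<n2}"
  shows "perm_sum n1 id b permutes {n1..<n1 + n2}" and "sign (perm_sum n1 id b) = sign b"
proof -
  have bij: "bij_betw (\<lambda>x. n1 + x) {0..<n2} {n1..<n1 + n2}"
    by (rule bij_betwI[of _ _ _ "\<lambda>x. x - n1"]) auto
  have shift: "perm_sum n1 id b = (\<lambda>x. if x \<in> {n1..<n1 + n2} then n1 + b (x - n1) else x)"
    using permutes_not_in[OF b] by (auto simp: perm_sum_def fun_eq_iff)
  interpret permutes_bij_finite b "{0..<n2}" "{n1..<n1 + n2}" "\<lambda>x. n1 + x" "\<lambda>x. x - n1"
    "perm_sum n1 id b"
    by unfold_locales (use b bij in \<open>auto simp: shift intro!: eq_reflection\<close>)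
  show "perm_sum n1 id b permutes {n1..<n1 + n2}" "sign (perm_sum n1 id b) = sign b"
    using permutes_p' sign_p' by simp_all
qed

lemma
  assumes a: "a permutes {0..<n1}" and b: "b permutes {0..<n2}"
  shows perm_sum_permutes: "perm_sum n1 a b permutes {0..<n1 + n2}"
    and sign_perm_sum: "sign (perm_sum n1 a b) = sign a * sign b"
proof -
  have comp: "perm_sum n1 a b = a \<circ> perm_sum n1 id b"
    using permutes_not_in[OF a] by (auto simp: perm_sum_def fun_eq_iff)
  have "a permutes {0..<n1 + n2}" "perm_sum n1 id b permutes {0..<n1 + n2}"
    using permutes_subset[OF a] permutes_subset[OF perm_sum_shift(1)[OF b]] by auto
  then show "perm_sum n1 a b permutes {0..<n1 + n2}"
    unfolding comp by (rule permutes_compose[rotated])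
  show "sign (perm_sum n1 a b) = sign a * sign b"
    using sign_compose[OF permutes_imp_permutation[OF _ a]
        permutes_imp_permutation[OF _ perm_sum_shift(1)[OF b]]] perm_sum_shift(2)[OF b]
    unfolding comp by simp
qed

lemma permutes_ge_if_lt_invariant:
  fixes s :: "nat \<Rightarrow> nat"
  assumes s: "s permutes {0..<n}" and low: "\<And>i. i < n1 \<Longrightarrow> s i < n1" and x: "n1 \<le> x"
  shows "n1 \<le> s x"
proof (rule ccontr)
  assume "\<not> n1 \<le> s x"
  have "s ` {0..<n1} = {0..<n1}"
    by (rule endo_inj_surj) (use low permutes_inj_on[OF s] in auto)
  then obtain y where "y < n1" "s y = s x"
    using \<open>\<not> n1 \<le> s x\<close> by (metis atLeastLessThan_iff imageE not_le zero_le)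
  then have "y = x"
    using permutes_inj[OF s] by (simp add: inj_eq)
  then show False
    using x \<open>y < n1\<close> by simp
qed

lemma perm_sum_inj:
  assumes "a permutes {0..<n1}" "b permutes {0..<n2}" "a' permutes {0..<n1}" "b' permutes {0..<n2}"
    and eq: "perm_sum n1 a b = perm_sum n1 a' b'"
  shows "a = a' \<and> b = b'"
proof
  show "a = a'"
  proof
    fix x
    show "a x = a' x"
      using fun_cong[OF eq, of x] permutes_not_in[OF assms(1), of x] permutes_not_in[OF assms(3), of x]
      by (cases "x < n1") (simp_all add: perm_sum_def)
  qed
  show "b = b'"
  proof
    fix y
    show "b y = b' y"
      using fun_cong[OF eq, of "n1 + y"] permutes_not_in[OF assms(2), of y]
        permutes_not_in[OF assms(4), of y]
      by (cases "y < n2") (simp_all add: perm_sum_def)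
  qed
qed

lemma permutes_shift_back:
  fixes s :: "nat \<Rightarrow> nat"
  assumes s: "s permutes {0..<n1 + n2}" and high: "\<And>x. n1 \<le> x \<Longrightarrow> n1 \<le> s x"
  shows "(\<lambda>y. if y < n2 then s (n1 + y) - n1 else y) permutes {0..<n2}"
proof (rule bij_imp_permutes)
  let ?b = "\<lambda>y. if y < n2 then s (n1 + y) - n1 else y"
  have "inj_on ?b {0..<n2}"
  proof (rule inj_onI)
    fix x y assume "x \<in> {0..<n2}" "y \<in> {0..<n2}" "?b x = ?b y"
    then have "s (n1 + x) = s (n1 + y)"
      using high[of "n1 + x"] high[of "n1 + y"] by simp
    then show "x = y"
      using permutes_inj[OF s] by (simp add: inj_eq)
  qed
  moreover have "?b ` {0..<n2} \<subseteq> {0..<n2}"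
  proof clarsimp
    fix y assume "y < n2"
    then have "s (n1 + y) < n1 + n2"
      using permutes_in_image[OF s, of "n1 + y"] by simp
    then show "s (n1 + y) - n1 < n2"
      using \<open>y < n2\<close> by linarith
  qed
  ultimately show "bij_betw ?b {0..<n2} {0..<n2}"
    using endo_inj_surj[of "{0..<n2}" ?b] by (simp add: bij_betw_def)
qed simp

lemma permutes_perm_sum_decompose:
  fixes s :: "nat \<Rightarrow> nat"
  assumes s: "s permutes {0..<n1 + n2}" and low: "\<And>i. i < n1 \<Longrightarrow> s i < n1"
  obtains a b where "a permutes {0..<n1}" "b permutes {0..<n2}" "s = perm_sum n1 a b"
proof
  let ?a = "\<lambda>x. if x < n1 then s x else x"
  let ?b = "\<lambda>y. if y < n2 then s (n1 + y) - n1 else y"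
  have high: "n1 \<le> s x" if "n1 \<le> x" for x
    using permutes_ge_if_lt_invariant[OF s low that] .
  have "s ` {0..<n1} = {0..<n1}"
    by (rule endo_inj_surj) (use low permutes_inj_on[OF s] in auto)
  moreover have "bij_betw ?a {0..<n1} {0..<n1} \<longleftrightarrow> bij_betw s {0..<n1} {0..<n1}"
    by (rule bij_betw_cong) simp
  ultimately have "bij_betw ?a {0..<n1} {0..<n1}"
    using permutes_inj_on[OF s] by (simp add: bij_betw_def)
  then show "?a permutes {0..<n1}"
    by (rule bij_imp_permutes) simp
  show "?b permutes {0..<n2}"
    using s high by (rule permutes_shift_back)
  show "s = perm_sum n1 ?a ?b"
  proof
    fix x
    show "s x = perm_sum n1 ?a ?b x"
      using high[of x] permutes_not_in[OF s, of x] by (cases "x < n1 + n2") (auto simp: perm_sum_def)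
  qed
qed

lemma bij_betw_perm_sum:
  "bij_betw (\<lambda>(a, b). perm_sum n1 a b)
     ({a. a permutes {0..<n1}} \<times> {b. b permutes {0..<n2}})
     {s. s permutes {0..<n1 + n2} \<and> (\<forall>i<n1. s i < n1)}"
  unfolding bij_betw_def
proof
  show "inj_on (\<lambda>(a, b). perm_sum n1 a b) ({a. a permutes {0..<n1}} \<times> {b. b permutes {0..<n2}})"
    using perm_sum_inj by (intro inj_onI) auto
  have "perm_sum n1 a b permutes {0..<n1 + n2} \<and> (\<forall>i<n1. perm_sum n1 a b i < n1)"
    if "a permutes {0..<n1}" "b permutes {0..<n2}" for a b
    using perm_sum_permutes[OF that] permutes_in_image[OF that(1)] by (simp add: perm_sum_def)
  moreover have "s \<in> (\<lambda>(a, b). perm_sum n1 a b) ` ({a. a permutes {0..<n1}} \<times> {b. b permutes {0..<n2}})"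
    if "s permutes {0..<n1 + n2}" "\<forall>i<n1. s i < n1" for s
    using that by (auto elim!: permutes_perm_sum_decompose[of s n1 n2])
  ultimately show "(\<lambda>(a, b). perm_sum n1 a b) ` ({a. a permutes {0..<n1}} \<times> {b. b permutes {0..<n2}})
      = {s. s permutes {0..<n1 + n2} \<and> (\<forall>i<n1. s i < n1)}"
    by fast
qed

lemma prod_perm_sum:
  "(\<Prod>i = 0..<n1 + n2. f i (perm_sum n1 a b i))
     = (\<Prod>i = 0..<n1. f i (a i)) * (\<Prod>i = 0..<n2. f (n1 + i) (n1 + b i))"
proof -
  have "(\<Prod>i = n1..<n1 + n2. f i (perm_sum n1 a b i)) = (\<Prod>i = 0..<n2. f (n1 + i) (n1 + b i))"
    using prod.shift_bounds_nat_ivl[of "\<lambda>i. f i (perm_sum n1 a b i)" 0 n1 n2]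
    by (simp add: perm_sum_def add.commute)
  moreover have "(\<Prod>i = 0..<n1. f i (perm_sum n1 a b i)) = (\<Prod>i = 0..<n1. f i (a i))"
    by (rule prod.cong) (simp_all add: perm_sum_def)
  moreover have "(\<Prod>i = 0..<n1 + n2. f i (perm_sum n1 a b i))
      = (\<Prod>i = 0..<n1. f i (perm_sum n1 a b i)) * (\<Prod>i = n1..<n1 + n2. f i (perm_sum n1 a b i))"
    by (rule prod.atLeastLessThan_concat[symmetric]) simp_all
  ultimately show ?thesis
    by simp
qed

lemma det_mat_two_blocks:
  fixes f :: "nat \<Rightarrow> nat \<Rightarrow> 'a::comm_ring_1"
  assumes zero: "\<And>i j. i < n1 + n2 \<Longrightarrow> j < n1 + n2 \<Longrightarrow> (i < n1) \<noteq> (j < n1) \<Longrightarrow> f i j = 0"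
  shows "det (mat (n1 + n2) (n1 + n2) (\<lambda>(i, j). f i j))
       = det (mat n1 n1 (\<lambda>(i, j). f i j)) * det (mat n2 n2 (\<lambda>(i, j). f (n1 + i) (n1 + j)))"
proof -
  let ?h = "\<lambda>s. signof s * (\<Prod>i = 0..<n1 + n2. f i (s i))"
  let ?S = "{s. s permutes {0..<n1 + n2} \<and> (\<forall>i<n1. s i < n1)}"
  let ?A = "{a. a permutes {0..<n1}}" and ?B = "{b. b permutes {0..<n2}}"
  have "?h s = 0" if "s \<in> {s. s permutes {0..<n1 + n2}} - ?S" for s
  proof -
    have s: "s permutes {0..<n1 + n2}" and "\<not> (\<forall>i<n1. s i < n1)"
      using that by auto
    then obtain i where i: "i < n1" "n1 \<le> s i"
      by (auto simp: not_less)
    then have "f i (s i) = 0"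
      using permutes_in_image[OF s, of i] by (intro zero) auto
    then have "(\<Prod>i = 0..<n1 + n2. f i (s i)) = 0"
      using i by (intro prod_zero) auto
    then show ?thesis
      by simp
  qed
  then have "det (mat (n1 + n2) (n1 + n2) (\<lambda>(i, j). f i j)) = sum ?h ?S"
    unfolding det_mat_leibniz
    by (intro sum.mono_neutral_right) (auto simp: finite_permutations)
  also have "\<dots> = (\<Sum>ab \<in> ?A \<times> ?B. ?h ((\<lambda>(a, b). perm_sum n1 a b) ab))"
    by (rule sum.reindex_bij_betw[OF bij_betw_perm_sum, symmetric])
  also have "\<dots> = (\<Sum>(a, b) \<in> ?A \<times> ?B. (signof a * (\<Prod>i = 0..<n1. f i (a i)))
                  * (signof b * (\<Prod>i = 0..<n2. f (n1 + i) (n1 + b i))))"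
    by (intro sum.cong) (auto simp: sign_perm_sum prod_perm_sum)
  also have "\<dots> = det (mat n1 n1 (\<lambda>(i, j). f i j)) * det (mat n2 n2 (\<lambda>(i, j). f (n1 + i) (n1 + j)))"
    by (simp add: det_mat_leibniz sum_product sum.cartesian_product)
  finally show ?thesis .
qed

lemma det_mat_block_diagonal:
  fixes f :: "nat \<Rightarrow> nat \<Rightarrow> 'a::comm_ring_1"
  assumes "\<And>s t. s < q * K \<Longrightarrow> t < q * K \<Longrightarrow> s div K \<noteq> t div K \<Longrightarrow> f s t = 0"
  shows "det (mat (q * K) (q * K) (\<lambda>(s, t). f s t))
       = (\<Prod>c<q. det (mat K K (\<lambda>(i, j). f (c * K + i) (c * K + j))))"
  using assms
proof (induction q)
  case 0
  then show ?case by (simp add: det_dim_zero)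
next
  case (Suc q)
  have "f i j = 0" if "i < q * K + K" "j < q * K + K" "(i < q * K) \<noteq> (j < q * K)" for i j
  proof -
    have "i div K \<noteq> j div K"
      using that by (metis add_mult_distrib div_less_iff_less_mult mult.commute mult_1 not_gr0
          not_less0 le_div_geq less_mult_imp_div_less)
    then show ?thesis
      using Suc.prems that by (simp add: add.commute)
  qed
  then have "det (mat (q * K + K) (q * K + K) (\<lambda>(s, t). f s t))
      = det (mat (q * K) (q * K) (\<lambda>(s, t). f s t)) * det (mat K K (\<lambda>(i, j). f (q * K + i) (q * K + j)))"
    by (rule det_mat_two_blocks)
  moreover have "det (mat (q * K) (q * K) (\<lambda>(s, t). f s t))
      = (\<Prod>c<q. det (mat K K (\<lambda>(i, j). f (c * K + i) (c * K + j))))"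
    by (rule Suc.IH) (use Suc.prems in auto)
  ultimately show ?case
    by (simp add: add.commute)
qed

lemma permutes_subset_if_le:
  fixes s :: "nat \<Rightarrow> nat"
  assumes s: "s permutes {0..<L}" and le: "\<And>i. l \<le> i \<Longrightarrow> i < L \<Longrightarrow> i \<le> s i"
  shows "s permutes {0..<l}"
proof -
  let ?B = "{l..<L}"
  have "s ` ?B \<subseteq> ?B"
    using le permutes_in_image[OF s] by fastforce
  then have img: "s ` ?B = ?B"
    by (rule endo_inj_surj[rotated]) (use permutes_inj_on[OF s] in auto)
  have fixed: "s i = i" if "i \<in> ?B" for i
  proof (rule ccontr)
    assume "s i \<noteq> i"
    then have "i < s i"
      using le that by fastforce
    then have "sum id ?B < sum s ?B"
      using le that by (intro sum_strict_mono_ex1) auto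
    moreover have "sum s ?B = sum id ?B"
      using sum.reindex[OF permutes_inj_on[OF s], of id ?B] img by simp
    ultimately show False
      by simp
  qed
  show ?thesis
    unfolding permutes_def
  proof
    show "\<forall>x. x \<notin> {0..<l} \<longrightarrow> s x = x"
      using fixed permutes_not_in[OF s] by (metis atLeastLessThan_iff not_le zero_le)
  qed (use s in \<open>auto simp: permutes_def\<close>)
qed

definition graded :: "(var \<Rightarrow> nat) \<Rightarrow> (nat \<Rightarrow> mpoly) \<Rightarrow> bool" where
  "graded w a \<longleftrightarrow> (\<forall>j. homog w (a j) (int j))"

definition var_weight :: "var \<Rightarrow> nat" where
  "var_weight v = (case v of Inl k \<Rightarrow> k | Inr k \<Rightarrow> k)"

lemma graded_tseq: "graded var_weight tseq"
  and graded_tsseq: "graded var_weight tsseq"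
proof -
  have "homog var_weight (pvar (Inl j)) (int j)" "homog var_weight (pvar (Inr j)) (int j)" for j
    using homog_pvar[of var_weight "Inl j"] homog_pvar[of var_weight "Inr j"]
    by (simp_all add: var_weight_def)
  then show "graded var_weight tseq" "graded var_weight tsseq"
    by (simp_all add: graded_def tseq_def tsseq_def)
qed

lemma graded_dilate:
  assumes "graded w a"
  shows "graded (\<lambda>v. p * w v) (dilate p a)"
  unfolding graded_def
proof
  fix j
  show "homog (\<lambda>v. p * w v) (dilate p a j) (int j)"
  proof (cases "0 < j \<and> p dvd j")
    case True
    then obtain q where j: "j = p * q" by blast
    have "homog w (a q) (int q)"
      using assms by (simp add: graded_def)
    then show ?thesis
      using True j by (simp add: dilate_def homog_def wdeg_scale)
  qed (auto simp: dilate_def)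
qed

lemma hZ_0 [simp]: "hZ a 0 = 1"
  by (simp add: hZ_def hcomp_def)

lemma hZ_neg: "k < 0 \<Longrightarrow> hZ a k = 0"
  by (simp add: hZ_def)

lemma homog_gen_series_power:
  assumes "graded w a"
  shows "homog w (fps_nth (gen_series a ^ n) k) (int k)"
proof (induction n arbitrary: k)
  case 0
  then show ?case by (cases k) simp_all
next
  case (Suc n)
  have "homog w (fps_nth (gen_series a) i * fps_nth (gen_series a ^ n) (k - i)) (int k)"
    if "i \<le> k" for i
  proof -
    have "homog w (fps_nth (gen_series a) i) (int i)"
      using assms by (simp add: graded_def gen_series_def)
    from homog_mult[OF this Suc.IH[of "k - i"]] show ?thesis
      using that by simp
  qed
  then show ?case
    by (auto simp: fps_mult_nth intro!: homog_sum)
qed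

lemma homog_hcomp: "graded w a \<Longrightarrow> homog w (hcomp a k) (int k)"
  unfolding hcomp_def by (intro homog_sum homog_pconst_mult homog_gen_series_power)

lemma homog_hZ: "graded w a \<Longrightarrow> homog w (hZ a k) k"
  using homog_hcomp[of w a "nat k"] by (auto simp: hZ_def)

lemma homog_det:
  assumes "\<And>i j. i < n \<Longrightarrow> j < n \<Longrightarrow> homog w (f i j) (r i + c j)"
  shows "homog w (det (mat n n (\<lambda>(i, j). f i j))) (\<Sum>i<n. r i + c i)"
  unfolding det_mat_leibniz
proof (rule homog_sum)
  fix s assume "s \<in> {s. s permutes {0..<n}}"
  then have s: "s permutes {0..<n}" by simp
  have "homog w (\<Prod>i = 0..<n. f i (s i)) (\<Sum>i = 0..<n. r i + c (s i))"
    by (rule homog_prod) (use s permutes_in_image in \<open>auto intro!: assms\<close>)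
  moreover have "(\<Sum>i = 0..<n. c (s i)) = (\<Sum>i = 0..<n. c i)"
    using sum.permute[OF s, of c] by (simp add: comp_def)
  ultimately have "homog w (\<Prod>i = 0..<n. f i (s i)) (\<Sum>i<n. r i + c i)"
    by (simp add: sum.distrib atLeast0LessThan)
  then show "homog w (signof s * (\<Prod>i = 0..<n. f i (s i))) (\<Sum>i<n. r i + c i)"
    by (rule homog_signof_mult)
qed

lemma homog_schur:
  assumes "graded w a"
  shows "homog w (schur l a) (int (sum_list l))"
proof -
  have "homog w (schur l a) (\<Sum>i<length l. (int (l ! i) - int i) + int i)"
    unfolding schur_def by (rule homog_det) (use homog_hZ[OF assms] in simp)
  then show ?thesis
    by (simp add: sum_list_sum_nth atLeast0LessThan)
qed

lemma lookup_schur_mult_schur_nonzero: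
  assumes "graded w a" and "graded w b"
    and "Poly_Mapping.lookup (schur l a * schur l b) x \<noteq> 0"
  shows "wdeg w x = 2 * sum_list l"
proof -
  have "homog w (schur l a * schur l b) (int (sum_list l) + int (sum_list l))"
    using homog_mult[OF homog_schur homog_schur] assms(1,2) .
  from homog_lookup_nonzero[OF this assms(3)] show ?thesis
    by simp
qed

lemma lookup_prod_schur_mult_schur_nonzero:
  assumes "graded w a" and "graded w b" and "finite C"
    and "Poly_Mapping.lookup (\<Prod>c\<in>C. schur (mu c) a * schur (mu c) b) x \<noteq> 0"
  shows "wdeg w x = (\<Sum>c\<in>C. 2 * sum_list (mu c))"
proof -
  have "homog w (\<Prod>c\<in>C. schur (mu c) a * schur (mu c) b)
      (\<Sum>c\<in>C. int (sum_list (mu c)) + int (sum_list (mu c)))"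
    using assms(3) by (rule homog_prod) (intro homog_mult homog_schur assms(1,2))
  from homog_lookup_nonzero[OF this assms(4)]
  have "int (wdeg w x) = int (\<Sum>c\<in>C. 2 * sum_list (mu c))"
    by (simp add: of_nat_sum)
  then show ?thesis
    by (simp only: of_nat_eq_iff)
qed

lemma lookup_prod_schur_mult_schur_eq_0:
  fixes p :: nat
  assumes "graded w a" and "graded w b" and "wdeg w x \<le> D" and "c < p" and "D < sum_list (mu c)"
  shows "Poly_Mapping.lookup (\<Prod>c<p. schur (mu c) a * schur (mu c) b) x = 0"
proof (rule ccontr)
  assume "Poly_Mapping.lookup (\<Prod>c<p. schur (mu c) a * schur (mu c) b) x \<noteq> 0"
  then have "wdeg w x = (\<Sum>c<p. 2 * sum_list (mu c))"
    by (intro lookup_prod_schur_mult_schur_nonzero[OF assms(1,2)]) simp_all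
  moreover have "2 * sum_list (mu c) \<le> (\<Sum>c<p. 2 * sum_list (mu c))"
    using assms(4) by (intro member_le_sum) auto
  ultimately show False
    using assms(3,5) by linarith
qed

definition fps_dilate :: "nat \<Rightarrow> 'a::comm_ring_1 fps \<Rightarrow> 'a fps" where
  "fps_dilate p f = Abs_fps (\<lambda>k. if p dvd k then fps_nth f (k div p) else 0)"

lemma fps_dilate_nth: "fps_nth (fps_dilate p f) k = (if p dvd k then fps_nth f (k div p) else 0)"
  unfolding fps_dilate_def by simp

lemma fps_dilate_one: "p \<ge> 1 \<Longrightarrow> fps_dilate p 1 = 1"
  by (rule fps_ext) (auto simp: fps_dilate_nth elim!: dvdE)

lemma fps_dilate_mult:
  assumes p: "p \<ge> 1"
  shows "fps_dilate p (f * g) = fps_dilate p f * fps_dilate p g"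
proof (rule fps_ext)
  fix k
  let ?h = "\<lambda>i. fps_nth (fps_dilate p f) i * fps_nth (fps_dilate p g) (k - i)"
  show "fps_nth (fps_dilate p (f * g)) k = fps_nth (fps_dilate p f * fps_dilate p g) k"
  proof (cases "p dvd k")
    case False
    have "?h i = 0" if "i \<le> k" for i
    proof -
      have "\<not> (p dvd i \<and> p dvd (k - i))"
        using False that by (metis dvd_add le_add_diff_inverse)
      then show ?thesis
        by (auto simp: fps_dilate_nth)
    qed
    then show ?thesis
      using False by (simp add: fps_mult_nth fps_dilate_nth)
  next
    case True
    then obtain q where k: "k = p * q" by blast
    have "?h i = 0" if "i \<in> {0..k} - (\<lambda>j. p * j) ` {0..q}" for i
      using that p unfolding k by (auto simp: fps_dilate_nth elim!: dvdE)
    then have "(\<Sum>i = 0..k. ?h i) = (\<Sum>i\<in>(\<lambda>j. p * j) ` {0..q}. ?h i)"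
      using p unfolding k by (intro sum.mono_neutral_right) auto
    also have "\<dots> = (\<Sum>j = 0..q. fps_nth f j * fps_nth g (q - j))"
      using p by (subst sum.reindex)
        (auto simp: inj_on_def fps_dilate_nth k simp flip: diff_mult_distrib2)
    finally show ?thesis
      using p by (simp add: fps_mult_nth fps_dilate_nth k)
  qed
qed

lemma fps_dilate_power: "p \<ge> 1 \<Longrightarrow> fps_dilate p (f ^ n) = fps_dilate p f ^ n"
  by (induction n) (simp_all add: fps_dilate_one fps_dilate_mult)

lemma gen_series_dilate: "p \<ge> 1 \<Longrightarrow> gen_series (dilate p a) = fps_dilate p (gen_series a)"
  by (rule fps_ext) (auto simp: gen_series_def dilate_def fps_dilate_nth elim!: dvdE)

lemma hcomp_dilate:
  assumes p: "p \<ge> 1"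
  shows "hcomp (dilate p a) k = (if p dvd k then hcomp a (k div p) else 0)"
proof -
  let ?S = "gen_series a"
  let ?t = "\<lambda>n. pconst (inverse (fact n)) * fps_nth (?S ^ n) (k div p)"
  have "fps_nth (?S ^ n) (k div p) = 0" if "k div p < n" for n
    using startsby_zero_power_prefix[of ?S] that by (simp add: gen_series_def)
  then have "(\<Sum>n\<le>k. ?t n) = (\<Sum>n\<le>k div p. ?t n)"
    by (intro sum.mono_neutral_right) (auto simp: div_le_dividend)
  then show ?thesis
    unfolding hcomp_def gen_series_dilate[OF p] fps_dilate_power[OF p, symmetric]
    by (simp add: fps_dilate_nth)
qed

lemma hZ_dilate:
  assumes p: "p \<ge> 1"
  shows "hZ (dilate p a) k = (if int p dvd k then hZ a (k div int p) else 0)"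
proof (cases "k < 0")
  case True
  then show ?thesis
    using p by (simp add: hZ_def pos_imp_zdiv_neg_iff)
next
  case False
  then obtain k' where k: "k = int k'"
    by (metis nonneg_eq_int not_less)
  have "int k' div int p = int (k' div p)"
    by (simp add: zdiv_int)
  then show ?thesis
    unfolding k hZ_def using hcomp_dilate[OF p] by simp
qed

section \<open>Truncations of tau functions\<close>

definition partitions_size_le :: "nat \<Rightarrow> nat list set" where
  "partitions_size_le D = {l. is_partition l \<and> sum_list l \<le> D}"

lemma length_le_sum_list: "is_partition l \<Longrightarrow> length l \<le> sum_list l"
proof -
  assume "is_partition l"
  then have "sum_list (map (\<lambda>_. 1::nat) l) \<le> sum_list (map (\<lambda>x. x) l)"
    by (intro sum_list_mono) (auto simp: is_partition_def Suc_le_eq intro: gr0I)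
  then show ?thesis
    by (simp add: sum_list_triv)
qed

lemma finite_partitions_size_le: "finite (partitions_size_le D)"
proof (rule finite_subset)
  show "partitions_size_le D \<subseteq> {xs. set xs \<subseteq> {0..D} \<and> length xs \<le> D}"
    using length_le_sum_list member_le_sum_list
    by (fastforce simp: partitions_size_le_def intro: order_trans)
qed (rule finite_lists_length_le, simp)

definition partitions_len_le :: "nat \<Rightarrow> nat list set" where
  "partitions_len_le K = {l. is_partition l \<and> length l \<le> K}"

definition tau_poly :: "(int \<Rightarrow> complex) \<Rightarrow> int \<Rightarrow> (nat \<Rightarrow> mpoly) \<Rightarrow> (nat \<Rightarrow> mpoly) \<Rightarrow> nat \<Rightarrow> mpoly" where
  "tau_poly \<rho> N a b D =
     (\<Sum>l\<in>partitions_size_le D. pconst (rho_part \<rho> l N) * (schur l a * schur l b))"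

lemma tau_agrees_upto_tau_poly:
  assumes "graded w a" and "graded w b"
  shows "agrees_upto w (2 * D) (tau \<rho> N a b) (tau_poly \<rho> N a b D)"
  unfolding agrees_upto_def
proof (intro allI impI)
  fix x assume x: "wdeg w x \<le> 2 * D"
  let ?f = "\<lambda>l. rho_part \<rho> l N * Poly_Mapping.lookup (schur l a * schur l b) x"
  have "?f l = 0" if "l \<in> {l. is_partition l} - partitions_size_le D" for l
    using that x lookup_schur_mult_schur_nonzero[OF assms, of l x]
    by (auto simp: partitions_size_le_def)
  then have "infsum ?f {l. is_partition l} = infsum ?f (partitions_size_le D)"
    by (intro infsum_cong_neutral) (auto simp: partitions_size_le_def)
  then show "tau \<rho> N a b x = Poly_Mapping.lookup (tau_poly \<rho> N a b D) x"
    by (simp add: tau_def tau_poly_def finite_partitions_size_le lookup_sum lookup_pconst_mult)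
qed

lemma ser_prod_tau_agrees_upto:
  assumes "graded w a" and "graded w b"
  shows "agrees_upto w (2 * D) (ser_prod (\<lambda>j. tau (\<rho> j) (N j) a b) ms)
           (prod_list (map (\<lambda>j. tau_poly (\<rho> j) (N j) a b D) ms))"
  using assms by (intro agrees_upto_ser_prod tau_agrees_upto_tau_poly)

lemma lookup_prod_tau_poly:
  fixes p :: nat
  shows "Poly_Mapping.lookup (\<Prod>c<p. tau_poly (\<rho> c) (N c) a b D) x
     = (\<Sum>mu\<in>PiE {..<p} (\<lambda>_. partitions_size_le D).
          (\<Prod>c<p. rho_part (\<rho> c) (mu c) (N c))
          * Poly_Mapping.lookup (\<Prod>c<p. schur (mu c) a * schur (mu c) b) x)"
proof -
  have "(\<Prod>c<p. tau_poly (\<rho> c) (N c) a b D)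
      = (\<Sum>mu\<in>PiE {..<p} (\<lambda>_. partitions_size_le D).
           \<Prod>c<p. pconst (rho_part (\<rho> c) (mu c) (N c)) * (schur (mu c) a * schur (mu c) b))"
    unfolding tau_poly_def by (rule prod_sum_PiE) (simp_all add: finite_partitions_size_le)
  also have "\<dots> = (\<Sum>mu\<in>PiE {..<p} (\<lambda>_. partitions_size_le D).
      pconst (\<Prod>c<p. rho_part (\<rho> c) (mu c) (N c)) * (\<Prod>c<p. schur (mu c) a * schur (mu c) b))"
    by (simp add: prod.distrib prod_pconst)
  finally show ?thesis
    by (simp add: lookup_sum lookup_pconst_mult)
qed

lemma lookup_prod_tau_poly_eq_infsum:
  fixes p :: nat
  assumes a: "graded w a" and b: "graded w b" and x: "wdeg w x \<le> D" and D: "D < K"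
  shows "Poly_Mapping.lookup (\<Prod>c<p. tau_poly (\<rho> c) (N c) a b D) x
       = infsum (\<lambda>mu. (\<Prod>c<p. rho_part (\<rho> c) (mu c) (N c))
                     * Poly_Mapping.lookup (\<Prod>c<p. schur (mu c) a * schur (mu c) b) x)
           (PiE {..<p} (\<lambda>_. partitions_len_le K))"
    (is "_ = infsum ?g _")
proof -
  have "infsum ?g (PiE {..<p} (\<lambda>_. partitions_len_le K))
      = infsum ?g (PiE {..<p} (\<lambda>_. partitions_size_le D))"
  proof (rule infsum_cong_neutral)
    fix mu
    assume "mu \<in> PiE {..<p} (\<lambda>_. partitions_size_le D) - PiE {..<p} (\<lambda>_. partitions_len_le K)"
    moreover have "partitions_size_le D \<subseteq> partitions_len_le K"
      using length_le_sum_list D by (fastforce simp: partitions_size_le_def partitions_len_le_def)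
    ultimately show "?g mu = 0"
      using PiE_mono[of "{..<p}" "\<lambda>_. partitions_size_le D" "\<lambda>_. partitions_len_le K"] by blast
  next
    fix mu assume "mu \<in> PiE {..<p} (\<lambda>_. partitions_len_le K) - PiE {..<p} (\<lambda>_. partitions_size_le D)"
    then obtain c where "c < p" "D < sum_list (mu c)"
      by (fastforce simp: PiE_iff partitions_size_le_def partitions_len_le_def)
    then show "?g mu = 0"
      using lookup_prod_schur_mult_schur_eq_0[OF a b x] by simp
  qed simp
  then show ?thesis
    by (simp add: lookup_prod_tau_poly finite_partitions_size_le finite_PiE)
qed

lemma prod_list_upt_split:
  assumes "i \<le> p"
  shows "prod_list (map f [1..<i+1]) * prod_list (map g [i+1..<p+1])
       = (\<Prod>c<p. if c < i then f (c + 1) else g (c + 1))"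
proof -
  have upt: "prod_list (map h [a + 1..<b + 1]) = (\<Prod>c\<in>{a..<b}. h (c + 1))" for h a b
  proof -
    have "prod_list (map h [a + 1..<b + 1]) = prod h (set [a + 1..<b + 1])"
      by (rule prod.distinct_set_conv_list[symmetric]) simp
    also have "\<dots> = prod h {a + 1..<b + 1}"
      by (simp only: set_upt)
    also have "\<dots> = (\<Prod>c\<in>{a..<b}. h (c + 1))"
      by (rule prod.shift_bounds_nat_ivl)
    finally show ?thesis .
  qed
  have "prod_list (map f [1..<i+1]) = (\<Prod>c<i. f (c + 1))"
    using upt[of f 0 i] by (simp add: atLeast0LessThan)
  moreover have "prod_list (map g [i+1..<p+1]) = (\<Prod>c\<in>{i..<p}. g (c + 1))"
    by (rule upt)
  moreover have "(\<Prod>c<p. if c < i then f (c + 1) else g (c + 1))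
      = (\<Prod>c<i. f (c + 1)) * (\<Prod>c\<in>{i..<p}. g (c + 1))"
    using prod.atLeastLessThan_concat[of 0 i p "\<lambda>c. if c < i then f (c + 1) else g (c + 1)"] assms
    by (simp add: atLeast0LessThan)
  ultimately show ?thesis
    by simp
qed

section \<open>Beta numbers\<close>

definition part_entry :: "nat list \<Rightarrow> nat \<Rightarrow> nat" where
  "part_entry l i = (if i < length l then l ! i else 0)"

definition beta :: "nat \<Rightarrow> nat \<Rightarrow> nat list \<Rightarrow> nat \<Rightarrow> nat" where
  "beta L off l i = part_entry l i + (L - 1 - i) + off"

definition beta_set :: "nat \<Rightarrow> nat \<Rightarrow> nat list \<Rightarrow> nat set" where
  "beta_set L off l = beta L off l ` {0..<L}"

definition nth_largest :: "nat set \<Rightarrow> nat \<Rightarrow> nat" where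
  "nth_largest U i = sorted_list_of_set U ! (card U - 1 - i)"

definition beta_partition :: "nat \<Rightarrow> nat \<Rightarrow> nat set \<Rightarrow> nat list" where
  "beta_partition L off U =
     filter (\<lambda>x. 0 < x) (map (\<lambda>i. nth_largest U i - (L - 1 - i) - off) [0..<L])"

lemma part_entry_Nil [simp]: "part_entry [] i = 0"
  by (simp add: part_entry_def)

lemma beta_Nil [simp]: "beta L off [] i = L - 1 - i + off"
  by (simp add: beta_def)

lemma beta_Nil_le: "beta L off [] i \<le> beta L off l i"
  by (simp add: beta_def part_entry_def)

lemma part_entry_antimono: "is_partition l \<Longrightarrow> i \<le> j \<Longrightarrow> part_entry l j \<le> part_entry l i"
  unfolding is_partition_def part_entry_def
  by (auto simp: sorted_wrt_iff_nth_less dest: le_neq_implies_less)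

lemma beta_strict_antimono:
  "is_partition l \<Longrightarrow> i < j \<Longrightarrow> j < L \<Longrightarrow> beta L off l j < beta L off l i"
  using part_entry_antimono[of l i j] unfolding beta_def by auto

lemma inj_on_strict_antimono:
  fixes h :: "nat \<Rightarrow> nat"
  assumes "\<And>i j. i < j \<Longrightarrow> j < L \<Longrightarrow> h j < h i"
  shows "inj_on h {0..<L}"
proof (rule inj_onI)
  fix x y assume "x \<in> {0..<L}" "y \<in> {0..<L}" "h x = h y"
  then show "x = y"
    using assms[of x y] assms[of y x] by (cases x y rule: linorder_cases) auto
qed

lemma bij_betw_beta: "is_partition l \<Longrightarrow> bij_betw (beta L off l) {0..<L} (beta_set L off l)"
  unfolding bij_betw_def beta_set_def
  by (blast intro: inj_on_strict_antimono beta_strict_antimono)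

lemma card_beta_set: "is_partition l \<Longrightarrow> card (beta_set L off l) = L"
  using bij_betw_same_card[OF bij_betw_beta] by simp

lemma beta_set_Nil: "beta_set L off [] = {off..<off + L}"
proof -
  have "x \<in> beta L off [] ` {0..<L}" if "off \<le> x" "x < off + L" for x
    using that by (intro image_eqI[of _ _ "L - 1 - (x - off)"]) auto
  then show ?thesis
    by (auto simp: beta_set_def)
qed

lemma bij_betw_beta_Nil: "bij_betw (beta L off []) {0..<L} {off..<off + L}"
  using bij_betw_beta[of "[]" L off] by (simp add: beta_set_Nil is_partition_def)

lemma nth_largest_image:
  fixes h :: "nat \<Rightarrow> nat"
  assumes dec: "\<And>i j. i < j \<Longrightarrow> j < L \<Longrightarrow> h j < h i" and i: "i < L"
  shows "nth_largest (h ` {0..<L}) i = h i"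
proof -
  let ?xs = "map (\<lambda>k. h (L - 1 - k)) [0..<L]"
  have card: "card (h ` {0..<L}) = L"
    using inj_on_strict_antimono[OF dec] by (simp add: card_image)
  have "set ?xs = h ` {0..<L}"
  proof
    show "h ` {0..<L} \<subseteq> set ?xs"
    proof
      fix y assume "y \<in> h ` {0..<L}"
      then obtain j where "j < L" "y = h j"
        by auto
      then show "y \<in> set ?xs"
        by (auto simp: image_def intro!: bexI[of _ "L - 1 - j"])
    qed
  qed auto
  moreover have "sorted_wrt (<) ?xs"
    unfolding sorted_wrt_iff_nth_less by (auto intro!: dec)
  ultimately have "sorted_list_of_set (h ` {0..<L}) = ?xs"
    using sorted_list_of_set_unique[of "h ` {0..<L}" ?xs] card by simp
  then show ?thesis
    using i card by (simp add: nth_largest_def)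
qed

lemma
  assumes "finite U" and card: "card U = L"
  shows nth_largest_strict_antimono: "\<And>i j. i < j \<Longrightarrow> j < L \<Longrightarrow> nth_largest U j < nth_largest U i"
    and nth_largest_image_eq: "nth_largest U ` {0..<L} = U"
proof -
  let ?xs = "sorted_list_of_set U"
  have xs: "sorted_wrt (<) ?xs" "set ?xs = U" "length ?xs = L"
    using assms by simp_all
  show "nth_largest U j < nth_largest U i" if "i < j" "j < L" for i j
  proof -
    have "?xs ! (L - 1 - j) < ?xs ! (L - 1 - i)"
      by (rule sorted_wrt_nth_less[OF xs(1)]) (use that xs(3) in auto)
    then show ?thesis
      using card by (simp add: nth_largest_def)
  qed
  show "nth_largest U ` {0..<L} = U"
  proof
    show "U \<subseteq> nth_largest U ` {0..<L}"
    proof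
      fix u assume "u \<in> U"
      then obtain k where "k < L" "?xs ! k = u"
        using xs by (metis in_set_conv_nth)
      then show "u \<in> nth_largest U ` {0..<L}"
        using card by (intro image_eqI[of _ _ "L - 1 - k"]) (auto simp: nth_largest_def)
    qed
  next
    show "nth_largest U ` {0..<L} \<subseteq> U"
    proof clarify
      fix i assume "i \<in> {0..<L}"
      then have "L - 1 - i < length ?xs"
        using xs(3) by simp
      from nth_mem[OF this] show "nth_largest U i \<in> U"
        using xs(2) card by (simp add: nth_largest_def)
    qed
  qed
qed

lemma nth_largest_gap:
  assumes "finite U" and "card U = L" and "i + d < L"
  shows "nth_largest U (i + d) + d \<le> nth_largest U i"
  using assms(3)
proof (induction d)
  case (Suc d)
  then show ?case
    using nth_largest_strict_antimono[OF assms(1,2), of "i + d" "i + Suc d"] by simp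
qed simp

lemma part_entry_filter_pos:
  assumes "sorted_wrt (\<ge>) ys" and "i < length ys"
  shows "part_entry (filter (\<lambda>x. 0 < x) ys) i = ys ! (i::nat)"
  using assms
proof (induction ys arbitrary: i)
  case (Cons y ys)
  show ?case
  proof (cases "0 < y")
    case True
    show ?thesis
    proof (cases i)
      case (Suc i')
      then have "part_entry (filter (\<lambda>x. 0 < x) ys) i' = ys ! i'"
        using Cons by auto
      moreover have "part_entry (y # filter (\<lambda>x. 0 < x) ys) (Suc i')
          = part_entry (filter (\<lambda>x. 0 < x) ys) i'"
        by (simp add: part_entry_def)
      ultimately show ?thesis
        using True Suc by simp
    qed (use True in \<open>simp add: part_entry_def\<close>)
  next
    case False
    then have "\<forall>x\<in>set (y # ys). x = 0"
      using Cons.prems(1) by auto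
    then show ?thesis
      using nth_mem[OF Cons.prems(2)] by (auto simp: filter_empty_conv part_entry_def)
  qed
qed simp

lemma
  assumes fin: "finite U" and card: "card U = L" and ge: "U \<subseteq> {off..}"
  shows beta_partition_in: "beta_partition L off U \<in> partitions_len_le L"
    and beta_set_beta_partition: "beta_set L off (beta_partition L off U) = U"
proof -
  note nl = nth_largest_strict_antimono[OF fin card] nth_largest_image_eq[OF fin card]
  note gap = nth_largest_gap[OF fin card]
  have lb: "L - 1 - i + off \<le> nth_largest U i" if "i < L" for i
  proof -
    have "nth_largest U (L - 1) \<in> U"
      using nl(2) that by auto
    then have "off \<le> nth_largest U (L - 1)"
      using ge by auto
    then show ?thesis
      using gap[of i "L - 1 - i"] that by simp
  qed
  define f where "f i = nth_largest U i - (L - 1 - i) - off" for i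
  have "f j \<le> f i" if "i \<le> j" "j < L" for i j
    using gap[of i "j - i"] lb[of i] lb[of j] that unfolding f_def by simp
  then have sorted: "sorted_wrt (\<ge>) (map f [0..<L])"
    unfolding sorted_wrt_iff_nth_less by auto
  have part: "beta_partition L off U = filter (\<lambda>x. 0 < x) (map f [0..<L])"
    unfolding beta_partition_def f_def ..
  show "beta_partition L off U \<in> partitions_len_le L"
    unfolding partitions_len_le_def is_partition_def part
    by (auto simp: sorted_wrt_filter[OF sorted] intro: order_trans[OF length_filter_le])
  have "beta L off (beta_partition L off U) i = nth_largest U i" if "i < L" for i
    using part_entry_filter_pos[OF sorted, of i] lb[OF that] that
    unfolding part beta_def f_def by simp
  then have "beta_set L off (beta_partition L off U) = nth_largest U ` {0..<L}"
    unfolding beta_set_def by (intro image_cong) auto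
  then show "beta_set L off (beta_partition L off U) = U"
    using nl(2) by simp
qed

lemma beta_partition_beta_set:
  assumes "l \<in> partitions_len_le L"
  shows "beta_partition L off (beta_set L off l) = l"
proof -
  have l: "is_partition l" and len: "length l \<le> L"
    using assms by (auto simp: partitions_len_le_def)
  have "nth_largest (beta_set L off l) i = beta L off l i" if "i < L" for i
    unfolding beta_set_def by (rule nth_largest_image[OF beta_strict_antimono[OF l] that])
  then have "map (\<lambda>i. nth_largest (beta_set L off l) i - (L - 1 - i) - off) [0..<L]
      = map (part_entry l) [0..<L]"
    by (auto simp: beta_def)
  also have "\<dots> = l @ replicate (L - length l) 0"
    by (rule nth_equalityI) (use len in \<open>auto simp: part_entry_def nth_append\<close>)
  moreover have "\<forall>x\<in>set l. 0 < x"
    using l unfolding is_partition_def by (metis gr0I)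
  ultimately show ?thesis
    unfolding beta_partition_def by (simp add: filter_id_conv)
qed

text \<open>In the rows added by padding, the entries left of the diagonal vanish and the diagonal
  entries are 1.\<close>

lemma schur_eq_det_part_entry:
  assumes len: "length l \<le> L"
  shows "schur l a = det (mat L L (\<lambda>(i, j). hZ a (int (part_entry l i) - int i + int j)))"
proof -
  let ?l = "length l"
  let ?F = "\<lambda>i j. hZ a (int (part_entry l i) - int i + int j)"
  let ?t = "\<lambda>s. signof s * (\<Prod>i = 0..<L. ?F i (s i))"
  have "?t s = 0" if "s \<in> {s. s permutes {0..<L}} - {s. s permutes {0..<?l}}" for s
  proof -
    have s: "s permutes {0..<L}" and "\<not> s permutes {0..<?l}"
      using that by auto
    then obtain i where i: "?l \<le> i" "i < L" "s i < i"
      using permutes_subset_if_le[OF s] by (meson not_le)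
    then have "?F i (s i) = 0"
      by (intro hZ_neg) (simp add: part_entry_def)
    then have "(\<Prod>i = 0..<L. ?F i (s i)) = 0"
      using i by (intro prod_zero) auto
    then show ?thesis
      by simp
  qed
  then have "det (mat L L (\<lambda>(i, j). ?F i j)) = (\<Sum>s | s permutes {0..<?l}. ?t s)"
    unfolding det_mat_leibniz using len
    by (intro sum.mono_neutral_right) (auto simp: finite_permutations intro: permutes_subset)
  also have "\<dots> = (\<Sum>s | s permutes {0..<?l}.
      signof s * (\<Prod>i = 0..<?l. hZ a (int (l ! i) - int i + int (s i))))"
  proof (rule sum.cong[OF refl])
    fix s assume "s \<in> {s. s permutes {0..<?l}}"
    then have s: "s permutes {0..<?l}" by simp
    have "(\<Prod>i = 0..<L. ?F i (s i)) = (\<Prod>i = 0..<?l. ?F i (s i)) * (\<Prod>i = ?l..<L. ?F i (s i))"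
      using len by (simp add: prod.atLeastLessThan_concat)
    also have "(\<Prod>i = ?l..<L. ?F i (s i)) = 1"
      by (rule prod.neutral) (use permutes_not_in[OF s] in \<open>auto simp: part_entry_def\<close>)
    also have "(\<Prod>i = 0..<?l. ?F i (s i)) = (\<Prod>i = 0..<?l. hZ a (int (l ! i) - int i + int (s i)))"
      by (rule prod.cong) (auto simp: part_entry_def)
    finally show "?t s = signof s * (\<Prod>i = 0..<?l. hZ a (int (l ! i) - int i + int (s i)))"
      by simp
  qed
  also have "\<dots> = schur l a"
    unfolding schur_def det_mat_leibniz ..
  finally show ?thesis
    by simp
qed

lemma schur_eq_det_beta:
  assumes "length l \<le> L"
  shows "schur l a = det (mat L L (\<lambda>(i, j). hZ a (int (beta L off l i) - int (beta L off [] j))))"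
proof -
  have "mat L L (\<lambda>(i, j). hZ a (int (beta L off l i) - int (beta L off [] j)))
      = mat L L (\<lambda>(i, j). hZ a (int (part_entry l i) - int i + int j))"
    by (rule eq_matI) (auto simp: beta_def of_nat_diff intro!: arg_cong[where f = "hZ a"])
  then show ?thesis
    using schur_eq_det_part_entry[OF assms] by simp
qed

lemma card_filter_bij_betw:
  fixes M :: nat
  assumes "bij_betw h {0..<M} W"
  shows "card {i\<in>{..<M}. P (h i)} = card {w\<in>W. P w}"
proof -
  have inj: "inj_on h {0..<M}" and img: "h ` {0..<M} = W"
    using assms by (auto simp: bij_betw_def)
  have "card {i\<in>{..<M}. P (h i)} = card (h ` {i\<in>{..<M}. P (h i)})"
    by (rule card_image[symmetric], rule inj_on_subset[OF inj]) auto
  also have "h ` {i\<in>{..<M}. P (h i)} = {w\<in>W. P w}"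
    using img by auto
  finally show ?thesis .
qed

lemma prod_intervals_eq_prod_power:
  fixes e g :: "nat \<Rightarrow> nat" and X :: "nat \<Rightarrow> 'a::comm_monoid_mult"
  assumes e: "bij_betw e {0..<M} U" and g: "bij_betw g {0..<M} V"
    and le: "\<And>i. i < M \<Longrightarrow> g i \<le> e i" and B: "\<And>u. u \<in> U \<Longrightarrow> u < B"
  shows "(\<Prod>i<M. prod X {g i..<e i}) = (\<Prod>y<B. X y ^ (card {u\<in>U. y < u} - card {v\<in>V. y < v}))"
proof -
  have row: "prod X {g i..<e i} = (\<Prod>y<B. if g i \<le> y \<and> y < e i then X y else 1)"
    if "i < M" for i
  proof -
    have "e i < B"
      using B bij_betwE[OF e] that by simp
    then have "{y\<in>{..<B}. g i \<le> y \<and> y < e i} = {g i..<e i}"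
      by auto
    then show ?thesis
      by (simp add: prod.inter_filter[symmetric])
  qed
  have "(\<Prod>i<M. prod X {g i..<e i}) = (\<Prod>i<M. \<Prod>y<B. if g i \<le> y \<and> y < e i then X y else 1)"
    by (rule prod.cong[OF refl]) (simp add: row)
  also have "\<dots> = (\<Prod>y<B. \<Prod>i<M. if g i \<le> y \<and> y < e i then X y else 1)"
    by (rule prod.swap)
  also have "\<dots> = (\<Prod>y<B. X y ^ card {i\<in>{..<M}. g i \<le> y \<and> y < e i})"
    by (simp add: prod.inter_filter[symmetric])
  also have "\<dots> = (\<Prod>y<B. X y ^ (card {u\<in>U. y < u} - card {v\<in>V. y < v}))"
  proof (rule prod.cong[OF refl])
    fix y
    have "{i\<in>{..<M}. y < g i} \<subseteq> {i\<in>{..<M}. y < e i}"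
      using le by (auto intro: less_le_trans)
    moreover have "{i\<in>{..<M}. g i \<le> y \<and> y < e i} = {i\<in>{..<M}. y < e i} - {i\<in>{..<M}. y < g i}"
      by auto
    ultimately have "card {i\<in>{..<M}. g i \<le> y \<and> y < e i}
        = card {i\<in>{..<M}. y < e i} - card {i\<in>{..<M}. y < g i}"
      by (simp add: card_Diff_subset)
    then show "X y ^ card {i\<in>{..<M}. g i \<le> y \<and> y < e i}
        = X y ^ (card {u\<in>U. y < u} - card {v\<in>V. y < v})"
      using card_filter_bij_betw[OF e] card_filter_bij_betw[OF g] by simp
  qed
  finally show ?thesis .
qed

lemma prod_intervals_reindex:
  fixes e g e' g' :: "nat \<Rightarrow> nat"
  assumes e: "bij_betw e {0..<M} U" and g: "bij_betw g {0..<M} V"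
    and e': "bij_betw e' {0..<M} U" and g': "bij_betw g' {0..<M} V"
    and "\<And>i. i < M \<Longrightarrow> g i \<le> e i" and "\<And>i. i < M \<Longrightarrow> g' i \<le> e' i"
  shows "(\<Prod>i<M. prod X {g i..<e i}) = (\<Prod>i<M. prod X {g' i..<e' i})"
proof -
  have "finite U"
    using bij_betw_finite e by blast
  then obtain B where "\<And>u. u \<in> U \<Longrightarrow> u < B"
    by (metis finite_nat_set_iff_bounded)
  then show ?thesis
    using prod_intervals_eq_prod_power[OF e g, where X = X and B = B]
      prod_intervals_eq_prod_power[OF e' g', where X = X and B = B]
      assms(5,6) by simp
qed

lemma rho_part_eq_prod_beta:
  assumes "length l \<le> L"
  shows "rho_part r l N
       = (\<Prod>i<L. prod (\<lambda>y. r (int y + (N - int L + 1 - int off))) {beta L off [] i..<beta L off l i})"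
proof -
  let ?X = "\<lambda>y. r (int y + (N - int L + 1 - int off))"
  have row: "prod ?X {beta L off [] i..<beta L off l i} = (\<Prod>j<part_entry l i. r (N + int j - int i))"
    if "i < L" for i
  proof -
    have "prod ?X {beta L off [] i..<beta L off l i}
        = prod ?X {0 + beta L off [] i..<part_entry l i + beta L off [] i}"
      by (simp add: beta_def add.commute add.left_commute)
    also have "\<dots> = (\<Prod>j = 0..<part_entry l i. ?X (j + beta L off [] i))"
      by (rule prod.shift_bounds_nat_ivl)
    also have "\<dots> = (\<Prod>j<part_entry l i. r (N + int j - int i))"
      using that by (intro prod.cong) (auto simp: of_nat_diff algebra_simps)
    finally show ?thesis .
  qed
  have "(\<Prod>i<L. prod ?X {beta L off [] i..<beta L off l i})
      = (\<Prod>i<L. \<Prod>j<part_entry l i. r (N + int j - int i))"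
  proof (rule prod.cong[OF refl])
    fix i assume "i \<in> {..<L}"
    then show "prod ?X {beta L off [] i..<beta L off l i} = (\<Prod>j<part_entry l i. r (N + int j - int i))"
      using row by blast
  qed
  also have "\<dots> = (\<Prod>i<length l. \<Prod>j<part_entry l i. r (N + int j - int i))"
    by (rule prod.mono_neutral_right) (use assms in \<open>auto simp: part_entry_def\<close>)
  also have "\<dots> = rho_part r l N"
    unfolding rho_part_def by (rule prod.cong) (auto simp: part_entry_def)
  finally show ?thesis
    by simp
qed

text \<open>Each value r^(c+1)(k) = R(k p + c) is a product of r over p consecutive arguments.\<close>

lemma prod_rsup_interval:
  fixes M :: int
  assumes c: "c < p" and le: "\<alpha> \<le> \<beta>"
  shows "(\<Prod>k\<in>{\<alpha>..<\<beta>}. rsup r p (c + 1) (int k + M))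
       = (\<Prod>y\<in>{c + p * \<alpha>..<c + p * \<beta>}. r (int y + ((M - 1) * int p + 1)))"
  using le
proof (induction \<beta> rule: dec_induct)
  case (step b)
  let ?X = "\<lambda>y. r (int y + ((M - 1) * int p + 1))"
  have "rsup r p (c + 1) (int b + M) = (\<Prod>j<p. ?X (c + p * b + (p - Suc j)))"
    unfolding rsup_def Rfun_def by (rule prod.cong) (auto simp: of_nat_diff algebra_simps)
  also have "\<dots> = (\<Prod>j<p. ?X (c + p * b + j))"
    by (rule prod.nat_diff_reindex)
  also have "\<dots> = prod ?X {c + p * b..<c + p * b + p}"
    using prod.shift_bounds_nat_ivl[of ?X 0 "c + p * b" p]
    by (simp add: atLeast0LessThan add.commute)
  finally have block: "rsup r p (c + 1) (int b + M) = prod ?X {c + p * b..<c + p * b + p}" .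
  have "(\<Prod>k\<in>{\<alpha>..<Suc b}. rsup r p (c + 1) (int k + M))
      = (\<Prod>k\<in>{\<alpha>..<b}. rsup r p (c + 1) (int k + M)) * rsup r p (c + 1) (int b + M)"
    using step.hyps(1) by (simp add: prod.atLeastLessThan_Suc)
  also have "\<dots> = prod ?X {c + p * \<alpha>..<c + p * b} * prod ?X {c + p * b..<c + p * b + p}"
    unfolding step.IH block ..
  also have "\<dots> = prod ?X {c + p * \<alpha>..<c + p * Suc b}"
    using step.hyps(1) by (subst prod.atLeastLessThan_concat) (auto simp: algebra_simps)
  finally show ?case .
qed simp

lemma prod_lessThan_mult_blocks:
  fixes g :: "nat \<Rightarrow> 'a::comm_monoid_mult"
  shows "(\<Prod>s<p * K. g s) = (\<Prod>c<p. \<Prod>t<K. g (c * K + t))"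
proof -
  have "(\<Prod>t<K. g (c * K + t)) = prod g {c * K..<c * K + K}" for c
    using prod.shift_bounds_nat_ivl[of g 0 "c * K" K] by (simp add: atLeast0LessThan add.commute)
  then show ?thesis
    using prod.nat_group[of g K p] by (simp add: mult.commute)
qed

definition res_fibre :: "nat \<Rightarrow> nat set \<Rightarrow> nat \<Rightarrow> nat set" where
  "res_fibre p U c = {w. c + p * w \<in> U}"

lemma set_eq_if_res_fibres_eq:
  assumes "p \<ge> 1" and "\<And>c. c < p \<Longrightarrow> res_fibre p U c = res_fibre p W c"
  shows "U = W"
proof -
  have "x \<in> U \<longleftrightarrow> x \<in> W" for x
  proof -
    have "x div p \<in> res_fibre p U (x mod p) \<longleftrightarrow> x div p \<in> res_fibre p W (x mod p)"
      using assms by simp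
    then show ?thesis
      unfolding res_fibre_def by simp
  qed
  then show ?thesis
    by blast
qed

lemma finite_res_fibre:
  assumes "finite U" and "p \<ge> 1"
  shows "finite (res_fibre p U c)"
proof (rule finite_surj[OF assms(1)])
  show "res_fibre p U c \<subseteq> (\<lambda>x. (x - c) div p) ` U"
    using assms(2) by (force simp: res_fibre_def)
qed

lemma card_residue_class_eq_card_res_fibre:
  assumes inj: "inj_on h {0..<M}" and c: "c < p"
  shows "card {i\<in>{0..<M}. h i mod p = c} = card (res_fibre p (h ` {0..<M}) c)"
proof (rule bij_betw_same_card[of "\<lambda>i. h i div p"], rule bij_betw_imageI)
  show "inj_on (\<lambda>i. h i div p) {i\<in>{0..<M}. h i mod p = c}"
  proof (rule inj_onI)
    fix x y assume "x \<in> {i\<in>{0..<M}. h i mod p = c}" "y \<in> {i\<in>{0..<M}. h i mod p = c}"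
      and "h x div p = h y div p"
    then have "h x = h y"
      by (metis (mono_tags, lifting) div_mult_mod_eq mem_Collect_eq)
    then show "x = y"
      using inj_onD[OF inj] \<open>x \<in> {i\<in>{0..<M}. h i mod p = c}\<close> \<open>y \<in> {i\<in>{0..<M}. h i mod p = c}\<close>
      by auto
  qed
  show "(\<lambda>i. h i div p) ` {i\<in>{0..<M}. h i mod p = c} = res_fibre p (h ` {0..<M}) c"
  proof
    show "(\<lambda>i. h i div p) ` {i\<in>{0..<M}. h i mod p = c} \<subseteq> res_fibre p (h ` {0..<M}) c"
      by (auto simp: res_fibre_def)
    show "res_fibre p (h ` {0..<M}) c \<subseteq> (\<lambda>i. h i div p) ` {i\<in>{0..<M}. h i mod p = c}"
    proof
      fix w assume "w \<in> res_fibre p (h ` {0..<M}) c"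
      then obtain i where i: "i \<in> {0..<M}" "h i = c + p * w"
        by (auto simp: res_fibre_def)
      then have "h i mod p = c" "h i div p = w"
        using c by simp_all
      then show "w \<in> (\<lambda>i. h i div p) ` {i\<in>{0..<M}. h i mod p = c}"
        using i by force
    qed
  qed
qed

lemma int_dvd_diff_iff_mod_eq: "int p dvd (int x - int y) \<longleftrightarrow> x mod p = y mod p"
  by (metis mod_eq_dvd_iff of_nat_eq_iff zmod_int)

lemma card_res_fibre_eq_if_permutes:
  fixes u v :: "nat \<Rightarrow> nat"
  assumes s: "s permutes {0..<n}" and u: "inj_on u {0..<n}" and v: "inj_on v {0..<n}"
    and res: "\<And>i. i < n \<Longrightarrow> u i mod p = v (s i) mod p" and c: "c < p"
  shows "card (res_fibre p (u ` {0..<n}) c) = card (res_fibre p (v ` {0..<n}) c)"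
proof -
  let ?A = "{i\<in>{0..<n}. u i mod p = c}" and ?B = "{j\<in>{0..<n}. v j mod p = c}"
  have "s ` ?A \<subseteq> ?B"
  proof
    fix j assume "j \<in> s ` ?A"
    then obtain i where "i < n" "u i mod p = c" "j = s i"
      by auto
    then show "j \<in> ?B"
      using res[of i] permutes_in_image[OF s, of i] by simp
  qed
  moreover have "?B \<subseteq> s ` ?A"
  proof
    fix j assume j: "j \<in> ?B"
    then obtain i where i: "i \<in> {0..<n}" "j = s i"
      using permutes_image[OF s] by (metis (no_types, lifting) imageE mem_Collect_eq)
    then have "u i mod p = c"
      using j res[of i] by simp
    with i show "j \<in> s ` ?A"
      by blast
  qed
  ultimately have "s ` ?A = ?B"
    by (rule subset_antisym)
  then have "card ?A = card ?B"
    using card_image[OF permutes_inj_on[OF s, of ?A]] by simp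
  then show ?thesis
    using card_residue_class_eq_card_res_fibre[OF u c] card_residue_class_eq_card_res_fibre[OF v c]
    by simp
qed

section \<open>The abacus\<close>

text \<open>Bead s lies on runner s div K; the beads on runner c occupy the positions c + p w for
  w in the beta set of mu c, shifted by one on the runners c < i0. When all mu c are empty the
  beads fill the positions i0, ..., i0 + p K - 1.\<close>

locale abacus =
  fixes p K i0 :: nat
  assumes p: "1 \<le> p" and K: "1 \<le> K" and i0: "1 \<le> i0" "i0 \<le> p"
begin

abbreviation L :: nat where "L \<equiv> p * K"

definition runner_offset :: "nat \<Rightarrow> nat" where
  "runner_offset c = (if c < i0 then 1 else 0)"

definition bead_pos :: "(nat \<Rightarrow> nat list) \<Rightarrow> nat \<Rightarrow> nat" where
  "bead_pos mu s = s div K + p * beta K (runner_offset (s div K)) (mu (s div K)) (s mod K)"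

abbreviation empty_pos :: "nat \<Rightarrow> nat" where
  "empty_pos \<equiv> bead_pos (\<lambda>_. [])"

lemma runner_lt: "s < L \<Longrightarrow> s div K < p"
  by (simp add: less_mult_imp_div_less mult.commute)

lemma bead_index_lt: "c < p \<Longrightarrow> i < K \<Longrightarrow> c * K + i < L"
proof -
  assume "c < p" "i < K"
  then have "c * K + i < Suc c * K"
    by simp
  also have "\<dots> \<le> p * K"
    using \<open>c < p\<close> by (intro mult_right_mono) auto
  finally show ?thesis .
qed

lemma bead_pos_block:
  "c < p \<Longrightarrow> i < K \<Longrightarrow> bead_pos mu (c * K + i) = c + p * beta K (runner_offset c) (mu c) i"
  unfolding bead_pos_def by simp

lemma bead_pos_mod: "s < L \<Longrightarrow> bead_pos mu s mod p = s div K"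
  and bead_pos_div:
    "s < L \<Longrightarrow> bead_pos mu s div p = beta K (runner_offset (s div K)) (mu (s div K)) (s mod K)"
  using runner_lt p by (simp_all add: bead_pos_def)

lemma bead_pos_ge: "s < L \<Longrightarrow> i0 \<le> bead_pos mu s"
proof -
  assume s: "s < L"
  define c where "c = s div K"
  have "c + p * runner_offset c \<le> bead_pos mu s"
    unfolding bead_pos_def c_def[symmetric] beta_def by simp
  moreover have "i0 \<le> c + p * runner_offset c"
    using i0 by (auto simp: runner_offset_def)
  ultimately show ?thesis
    by simp
qed

lemma empty_pos_lt: "s < L \<Longrightarrow> empty_pos s < i0 + L"
proof -
  assume s: "s < L"
  define c where "c = s div K"
  have c: "c < p"
    using runner_lt[OF s] by (simp add: c_def)
  have pos: "empty_pos s = c + p * (K - 1 - s mod K + runner_offset c)"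
    by (simp add: bead_pos_def c_def)
  show ?thesis
  proof (cases "c < i0")
    case True
    have "p * (K - 1 - s mod K + runner_offset c) \<le> p * K"
      using True K by (intro mult_left_mono) (auto simp: runner_offset_def)
    then show ?thesis
      using pos True by linarith
  next
    case False
    have "p * (K - 1 - s mod K + runner_offset c) \<le> p * (K - 1)"
      using False by (intro mult_left_mono) (auto simp: runner_offset_def)
    also have "\<dots> = p * K - p"
      by (simp add: right_diff_distrib')
    finally have "p * (K - 1 - s mod K + runner_offset c) \<le> p * K - p" .
    moreover have "p \<le> p * K"
      using K by simp
    ultimately show ?thesis
      using pos c by linarith
  qed
qed

lemma inj_on_bead_pos:
  assumes mu: "\<And>c. c < p \<Longrightarrow> is_partition (mu c)"
  shows "inj_on (bead_pos mu) {0..<L}"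
proof (rule inj_onI)
  fix s t assume s: "s \<in> {0..<L}" and t: "t \<in> {0..<L}" and eq: "bead_pos mu s = bead_pos mu t"
  then have c: "s div K = t div K"
    using bead_pos_mod[of s mu] bead_pos_mod[of t mu] by simp
  then have "beta K (runner_offset (s div K)) (mu (s div K)) (s mod K)
      = beta K (runner_offset (s div K)) (mu (s div K)) (t mod K)"
    using bead_pos_div[of s mu] bead_pos_div[of t mu] s t eq by simp
  moreover have "inj_on (beta K (runner_offset (s div K)) (mu (s div K))) {0..<K}"
    using bij_betw_beta[OF mu[OF runner_lt]] s by (simp add: bij_betw_def)
  ultimately have "s mod K = t mod K"
    using K by (auto dest: inj_onD)
  with c show "s = t"
    by (metis div_mult_mod_eq)
qed

lemma res_fibre_bead_pos:
  assumes c: "c < p"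
  shows "res_fibre p (bead_pos mu ` {0..<L}) c = beta_set K (runner_offset c) (mu c)"
proof
  show "res_fibre p (bead_pos mu ` {0..<L}) c \<subseteq> beta_set K (runner_offset c) (mu c)"
  proof
    fix w assume "w \<in> res_fibre p (bead_pos mu ` {0..<L}) c"
    then obtain s where s: "s < L" "c + p * w = bead_pos mu s"
      by (auto simp: res_fibre_def)
    have "(c + p * w) mod p = c" "(c + p * w) div p = w"
      using c by simp_all
    then have "s div K = c" and "w = beta K (runner_offset c) (mu c) (s mod K)"
      using bead_pos_mod[OF s(1), of mu] bead_pos_div[OF s(1), of mu] unfolding s(2) by simp_all
    then show "w \<in> beta_set K (runner_offset c) (mu c)"
      using K by (auto simp: beta_set_def)
  qed
  show "beta_set K (runner_offset c) (mu c) \<subseteq> res_fibre p (bead_pos mu ` {0..<L}) c"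
  proof
    fix w assume "w \<in> beta_set K (runner_offset c) (mu c)"
    then obtain i where "i < K" "w = beta K (runner_offset c) (mu c) i"
      by (auto simp: beta_set_def)
    then show "w \<in> res_fibre p (bead_pos mu ` {0..<L}) c"
      using bead_pos_block[OF c, of i mu] bead_index_lt[OF c, of i]
      by (auto simp: res_fibre_def image_iff intro!: bexI[of _ "c * K + i"])
  qed
qed

lemma bij_betw_empty_pos: "bij_betw empty_pos {0..<L} {i0..<i0 + L}"
proof -
  have inj: "inj_on empty_pos {0..<L}"
    by (rule inj_on_bead_pos) (simp add: is_partition_def)
  have "empty_pos ` {0..<L} = {i0..<i0 + L}"
    using inj bead_pos_ge empty_pos_lt by (intro card_subset_eq) (auto simp: card_image)
  with inj show ?thesis
    by (simp add: bij_betw_def)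
qed

definition glue :: "(nat \<Rightarrow> nat list) \<Rightarrow> nat list" where
  "glue mu = beta_partition L i0 (bead_pos mu ` {0..<L})"

lemma
  assumes mu: "\<And>c. c < p \<Longrightarrow> mu c \<in> partitions_len_le K"
  shows glue_in: "glue mu \<in> partitions_len_le L"
    and beta_set_glue: "beta_set L i0 (glue mu) = bead_pos mu ` {0..<L}"
proof -
  have inj: "inj_on (bead_pos mu) {0..<L}"
    by (rule inj_on_bead_pos) (use mu in \<open>auto simp: partitions_len_le_def\<close>)
  then have "card (bead_pos mu ` {0..<L}) = L"
    by (simp add: card_image)
  moreover have "bead_pos mu ` {0..<L} \<subseteq> {i0..}"
    using bead_pos_ge by auto
  ultimately show "glue mu \<in> partitions_len_le L" "beta_set L i0 (glue mu) = bead_pos mu ` {0..<L}"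
    unfolding glue_def using beta_partition_in beta_set_beta_partition by auto
qed

definition balanced :: "nat list set" where
  "balanced = {l \<in> partitions_len_le L. \<forall>c<p. card (res_fibre p (beta_set L i0 l) c) = K}"

lemma glue_eq_glueD:
  assumes mu: "\<And>c. c < p \<Longrightarrow> mu c \<in> partitions_len_le K"
    and mu': "\<And>c. c < p \<Longrightarrow> mu' c \<in> partitions_len_le K"
    and eq: "glue mu = glue mu'" and c: "c < p"
  shows "mu c = mu' c"
proof -
  have "bead_pos mu ` {0..<L} = bead_pos mu' ` {0..<L}"
    using beta_set_glue[of mu, OF mu] beta_set_glue[of mu', OF mu'] eq by simp
  then show ?thesis
    using res_fibre_bead_pos[OF c, of mu] res_fibre_bead_pos[OF c, of mu']
      beta_partition_beta_set[OF mu[OF c]] beta_partition_beta_set[OF mu'[OF c]]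
    by metis
qed

lemma glue_balanced:
  assumes mu: "\<And>c. c < p \<Longrightarrow> mu c \<in> partitions_len_le K"
  shows "glue mu \<in> balanced"
proof -
  have "card (res_fibre p (beta_set L i0 (glue mu)) c) = K" if "c < p" for c
  proof -
    have "res_fibre p (beta_set L i0 (glue mu)) c = beta_set K (runner_offset c) (mu c)"
      using beta_set_glue[of mu, OF mu] res_fibre_bead_pos[OF that] by simp
    then show ?thesis
      using mu[OF that] by (simp add: card_beta_set partitions_len_le_def)
  qed
  then show ?thesis
    using glue_in[of mu, OF mu] by (simp add: balanced_def)
qed

definition pquotient :: "nat list \<Rightarrow> nat \<Rightarrow> nat list" where
  "pquotient l = restrict (\<lambda>c. beta_partition K (runner_offset c) (res_fibre p (beta_set L i0 l) c)) {..<p}"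

lemma pquotient_in:
  assumes l: "l \<in> balanced" and c: "c < p"
  shows "pquotient l c \<in> partitions_len_le K"
    and "beta_set K (runner_offset c) (pquotient l c) = res_fibre p (beta_set L i0 l) c"
proof -
  let ?U = "beta_set L i0 l"
  have fin: "finite (res_fibre p ?U c)"
    by (rule finite_res_fibre[OF _ p]) (simp add: beta_set_def)
  have card: "card (res_fibre p ?U c) = K"
    using l c by (simp add: balanced_def)
  have ge: "res_fibre p ?U c \<subseteq> {runner_offset c..}"
  proof
    fix w assume "w \<in> res_fibre p ?U c"
    then have "i0 \<le> c + p * w"
      by (auto simp: res_fibre_def beta_set_def beta_def)
    then show "w \<in> {runner_offset c..}"
      by (cases "w = 0") (auto simp: runner_offset_def)
  qed
  show "pquotient l c \<in> partitions_len_le K"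
    "beta_set K (runner_offset c) (pquotient l c) = res_fibre p ?U c"
    using beta_partition_in[OF fin card ge] beta_set_beta_partition[OF fin card ge] c
    by (simp_all add: pquotient_def)
qed

lemma glue_pquotient:
  assumes l: "l \<in> balanced"
  shows "glue (pquotient l) = l"
proof -
  have "bead_pos (pquotient l) ` {0..<L} = beta_set L i0 l"
  proof (rule set_eq_if_res_fibres_eq[OF p])
    fix c assume "c < p"
    then show "res_fibre p (bead_pos (pquotient l) ` {0..<L}) c = res_fibre p (beta_set L i0 l) c"
      using res_fibre_bead_pos pquotient_in(2)[OF l] by simp
  qed
  then show ?thesis
    using beta_partition_beta_set l by (simp add: glue_def balanced_def)
qed

lemma pquotient_in_PiE: "l \<in> balanced \<Longrightarrow> pquotient l \<in> PiE {..<p} (\<lambda>_. partitions_len_le K)"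
  using pquotient_in(1) by (simp add: PiE_iff pquotient_def)

lemma bij_betw_glue: "bij_betw glue (PiE {..<p} (\<lambda>_. partitions_len_le K)) balanced"
proof (rule bij_betwI')
  fix mu mu' assume mu: "mu \<in> PiE {..<p} (\<lambda>_. partitions_len_le K)"
    and mu': "mu' \<in> PiE {..<p} (\<lambda>_. partitions_len_le K)"
  show "glue mu = glue mu' \<longleftrightarrow> mu = mu'"
  proof
    assume "glue mu = glue mu'"
    then have "mu c = mu' c" if "c \<in> {..<p}" for c
      using glue_eq_glueD[of mu mu'] mu mu' that by auto
    then show "mu = mu'"
      by (rule PiE_ext[OF mu mu'])
  qed simp
next
  fix mu assume "mu \<in> PiE {..<p} (\<lambda>_. partitions_len_le K)"
  then have "\<And>c. c < p \<Longrightarrow> mu c \<in> partitions_len_le K"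
    by auto
  then show "glue mu \<in> balanced"
    by (rule glue_balanced)
next
  fix l assume "l \<in> balanced"
  then show "\<exists>mu\<in>PiE {..<p} (\<lambda>_. partitions_len_le K). l = glue mu"
    using glue_pquotient pquotient_in_PiE by metis
qed

lemma card_res_fibre_interval: "c < p \<Longrightarrow> card (res_fibre p {i0..<i0 + L} c) = K"
  using bij_betw_empty_pos res_fibre_bead_pos[of c "\<lambda>_. []"] card_beta_set[of "[]" K]
  by (simp add: bij_betw_def is_partition_def)

lemma hZ_dilate_bead_pos_block:
  assumes c: "c < p" and "i < K" and "j < K"
  shows "hZ (dilate p a) (int (bead_pos mu (c * K + i)) - int (empty_pos (c * K + j)))
       = hZ a (int (beta K (runner_offset c) (mu c) i) - int (beta K (runner_offset c) [] j))"
proof -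
  have "int (bead_pos mu (c * K + i)) - int (empty_pos (c * K + j))
      = int p * (int (beta K (runner_offset c) (mu c) i) - int (beta K (runner_offset c) [] j))"
    unfolding bead_pos_block[OF c assms(2)] bead_pos_block[OF c assms(3)]
    by (simp del: beta_Nil add: algebra_simps)
  then show ?thesis
    using hZ_dilate[OF p] p by (simp del: beta_Nil)
qed

lemma det_dilate_bead_pos:
  assumes mu: "\<And>c. c < p \<Longrightarrow> mu c \<in> partitions_len_le K"
  shows "det (mat L L (\<lambda>(s, t). hZ (dilate p a) (int (bead_pos mu s) - int (empty_pos t))))
       = (\<Prod>c<p. schur (mu c) a)"
proof -
  have "det (mat L L (\<lambda>(s, t). hZ (dilate p a) (int (bead_pos mu s) - int (empty_pos t))))
      = (\<Prod>c<p. det (mat K K (\<lambda>(i, j).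
            hZ (dilate p a) (int (bead_pos mu (c * K + i)) - int (empty_pos (c * K + j))))))"
  proof (rule det_mat_block_diagonal)
    fix s t assume "s < L" "t < L" "s div K \<noteq> t div K"
    then have "\<not> int p dvd (int (bead_pos mu s) - int (empty_pos t))"
      using bead_pos_mod[of s mu] bead_pos_mod[of t "\<lambda>_. []"] by (simp add: int_dvd_diff_iff_mod_eq)
    then show "hZ (dilate p a) (int (bead_pos mu s) - int (empty_pos t)) = 0"
      using hZ_dilate[OF p] by simp
  qed
  also have "\<dots> = (\<Prod>c<p. det (mat K K (\<lambda>(i, j).
      hZ a (int (beta K (runner_offset c) (mu c) i) - int (beta K (runner_offset c) [] j)))))"
    by (intro prod.cong refl arg_cong[where f = det] eq_matI)
      (simp_all del: beta_Nil add: hZ_dilate_bead_pos_block)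
  also have "\<dots> = (\<Prod>c<p. schur (mu c) a)"
    using schur_eq_det_beta mu by (intro prod.cong) (simp_all add: partitions_len_le_def)
  finally show ?thesis .
qed

lemma schur_dilate_glue:
  assumes mu: "\<And>c. c < p \<Longrightarrow> mu c \<in> partitions_len_le K"
  shows "schur (glue mu) (dilate p a) * schur (glue mu) (dilate p b)
       = (\<Prod>c<p. schur (mu c) a) * (\<Prod>c<p. schur (mu c) b)"
proof -
  have "is_partition (glue mu)" and len: "length (glue mu) \<le> L"
    using glue_in[of mu, OF mu] by (auto simp: partitions_len_le_def)
  then have e: "bij_betw (beta L i0 (glue mu)) {0..<L} (bead_pos mu ` {0..<L})"
    using bij_betw_beta beta_set_glue[of mu, OF mu] by metis
  have e': "bij_betw (bead_pos mu) {0..<L} (bead_pos mu ` {0..<L})"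
    using inj_on_bead_pos mu by (auto simp: bij_betw_def partitions_len_le_def)
  have "schur (glue mu) (dilate p a) * schur (glue mu) (dilate p b)
      = det (mat L L (\<lambda>(i, j). hZ (dilate p a) (int (beta L i0 (glue mu) i) - int (beta L i0 [] j))))
      * det (mat L L (\<lambda>(i, j). hZ (dilate p b) (int (beta L i0 (glue mu) i) - int (beta L i0 [] j))))"
    using schur_eq_det_beta[OF len] by simp
  also have "\<dots> = det (mat L L (\<lambda>(i, j). hZ (dilate p a) (int (bead_pos mu i) - int (empty_pos j))))
      * det (mat L L (\<lambda>(i, j). hZ (dilate p b) (int (bead_pos mu i) - int (empty_pos j))))"
    by (rule det_mult_det_reindex[OF e' e bij_betw_empty_pos bij_betw_beta_Nil,
          of "\<lambda>u v. hZ (dilate p a) (int u - int v)" "\<lambda>u v. hZ (dilate p b) (int u - int v)"])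
  also have "\<dots> = (\<Prod>c<p. schur (mu c) a) * (\<Prod>c<p. schur (mu c) b)"
    using det_dilate_bead_pos[OF mu] by simp
  finally show ?thesis .
qed

lemma schur_dilate_eq_0_if_unbalanced:
  assumes l: "l \<in> partitions_len_le L" and c0: "c0 < p"
    and unbalanced: "card (res_fibre p (beta_set L i0 l) c0) \<noteq> K"
  shows "schur l (dilate p a) = 0"
proof -
  have l_part: "is_partition l" and len: "length l \<le> L"
    using l by (auto simp: partitions_len_le_def)
  have "det (mat L L (\<lambda>(i, j). hZ (dilate p a) (int (beta L i0 l i) - int (beta L i0 [] j)))) = 0"
  proof (rule det_mat_eq_0, rule ccontr)
    fix s assume s: "s permutes {0..<L}"
      and "\<not> (\<exists>i<L. hZ (dilate p a) (int (beta L i0 l i) - int (beta L i0 [] (s i))) = 0)"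
    then have nz: "hZ (dilate p a) (int (beta L i0 l i) - int (beta L i0 [] (s i))) \<noteq> 0"
      if "i < L" for i
      using that by blast
    have res: "beta L i0 l i mod p = beta L i0 [] (s i) mod p" if "i < L" for i
    proof -
      have "int p dvd (int (beta L i0 l i) - int (beta L i0 [] (s i)))"
        using nz[OF that] hZ_dilate[OF p, of a] by (metis (full_types))
      then show ?thesis
        by (simp only: int_dvd_diff_iff_mod_eq)
    qed
    have "card (res_fibre p (beta L i0 l ` {0..<L}) c0) = card (res_fibre p (beta L i0 [] ` {0..<L}) c0)"
      using bij_betw_beta[OF l_part] bij_betw_beta_Nil
      by (intro card_res_fibre_eq_if_permutes[where u = "beta L i0 l" and v = "beta L i0 []",
            OF s _ _ res c0]) (auto simp: bij_betw_def)
    then show False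
      using unbalanced card_res_fibre_interval[OF c0] beta_set_Nil[of L i0]
      by (simp add: beta_set_def)
  qed
  then show ?thesis
    using schur_eq_det_beta[OF len] by simp
qed

lemma rho_part_quotient:
  fixes n :: int
  assumes c: "c < p" and mu: "mu c \<in> partitions_len_le K"
  shows "rho_part (rsup r p (c + 1)) (mu c) (n + int (runner_offset c))
       = (\<Prod>t<K. prod (\<lambda>y. r (int y + ((n - int K) * int p + 1)))
                   {empty_pos (c * K + t)..<bead_pos mu (c * K + t)})"
proof -
  have "rho_part (rsup r p (c + 1)) (mu c) (n + int (runner_offset c))
      = (\<Prod>t<K. \<Prod>k\<in>{beta K (runner_offset c) [] t..<beta K (runner_offset c) (mu c) t}.
           rsup r p (c + 1) (int k + (n - int K + 1)))"
    using rho_part_eq_prod_beta[of "mu c" K "rsup r p (c + 1)" "n + int (runner_offset c)"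
        "runner_offset c"] mu
    by (simp add: partitions_len_le_def algebra_simps)
  also have "\<dots> = (\<Prod>t<K. prod (\<lambda>y. r (int y + ((n - int K) * int p + 1)))
                   {empty_pos (c * K + t)..<bead_pos mu (c * K + t)})"
  proof (rule prod.cong[OF refl])
    fix t assume "t \<in> {..<K}"
    then show "(\<Prod>k\<in>{beta K (runner_offset c) [] t..<beta K (runner_offset c) (mu c) t}.
          rsup r p (c + 1) (int k + (n - int K + 1)))
        = prod (\<lambda>y. r (int y + ((n - int K) * int p + 1)))
            {empty_pos (c * K + t)..<bead_pos mu (c * K + t)}"
      using prod_rsup_interval[OF c beta_Nil_le, of r "n - int K + 1"] bead_pos_block[OF c]
      by (simp del: beta_Nil)
  qed
  finally show ?thesis .
qed

lemma rho_part_glue: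
  fixes n :: int
  assumes mu: "\<And>c. c < p \<Longrightarrow> mu c \<in> partitions_len_le K"
  shows "rho_part r (glue mu) (n * int p + int i0)
       = (\<Prod>c<p. rho_part (rsup r p (c + 1)) (mu c) (n + int (runner_offset c)))"
proof -
  let ?X = "\<lambda>y. r (int y + ((n - int K) * int p + 1))"
  have "is_partition (glue mu)" and len: "length (glue mu) \<le> L"
    using glue_in[of mu, OF mu] by (auto simp: partitions_len_le_def)
  then have e: "bij_betw (beta L i0 (glue mu)) {0..<L} (bead_pos mu ` {0..<L})"
    using bij_betw_beta beta_set_glue[of mu, OF mu] by metis
  have e': "bij_betw (bead_pos mu) {0..<L} (bead_pos mu ` {0..<L})"
    using inj_on_bead_pos mu by (auto simp: bij_betw_def partitions_len_le_def)
  have le: "empty_pos s \<le> bead_pos mu s" for s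
    by (simp add: bead_pos_def beta_def)
  have "rho_part r (glue mu) (n * int p + int i0) = (\<Prod>i<L. prod ?X {beta L i0 [] i..<beta L i0 (glue mu) i})"
    using rho_part_eq_prod_beta[OF len, of r "n * int p + int i0" i0]
    by (simp del: beta_Nil add: algebra_simps)
  also have "\<dots> = (\<Prod>s<L. prod ?X {empty_pos s..<bead_pos mu s})"
    by (rule prod_intervals_reindex[OF e bij_betw_beta_Nil e' bij_betw_empty_pos beta_Nil_le le])
  also have "\<dots> = (\<Prod>c<p. \<Prod>t<K. prod ?X {empty_pos (c * K + t)..<bead_pos mu (c * K + t)})"
    by (rule prod_lessThan_mult_blocks)
  also have "\<dots> = (\<Prod>c<p. rho_part (rsup r p (c + 1)) (mu c) (n + int (runner_offset c)))"
    using rho_part_quotient mu by simp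
  finally show ?thesis .
qed

lemma coeff_schur_dilate_eq_0_if_not_balanced:
  assumes m: "wdeg var_weight m \<le> D" and D: "D < K"
    and l: "is_partition l" "l \<notin> balanced"
  shows "Poly_Mapping.lookup (schur l (dilate p tseq) * schur l (dilate p tsseq)) m = 0"
proof (rule ccontr)
  assume nz: "Poly_Mapping.lookup (schur l (dilate p tseq) * schur l (dilate p tsseq)) m \<noteq> 0"
  have "2 * sum_list l = wdeg (\<lambda>v. p * var_weight v) m"
    using lookup_schur_mult_schur_nonzero[OF graded_dilate graded_dilate nz]
      graded_tseq graded_tsseq by simp
  also have "\<dots> \<le> p * D"
    using m by (simp add: wdeg_scale)
  finally have "2 * sum_list l \<le> p * D" .
  moreover have "p * D < L"
    using D p by simp
  ultimately have "length l < L"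
    using length_le_sum_list[OF l(1)] by linarith
  then have "l \<in> partitions_len_le L"
    using l(1) by (simp add: partitions_len_le_def)
  then obtain c0 where "c0 < p" "card (res_fibre p (beta_set L i0 l) c0) \<noteq> K"
    using l(2) by (auto simp: balanced_def)
  then have "schur l (dilate p tseq) = 0"
    using schur_dilate_eq_0_if_unbalanced \<open>l \<in> partitions_len_le L\<close> by blast
  with nz show False
    by simp
qed

lemma coeff_tau_dilate:
  fixes n :: int
  assumes m: "wdeg var_weight m \<le> D" and D: "D < K"
  shows "tau r (n * int p + int i0) (dilate p tseq) (dilate p tsseq) m
       = Poly_Mapping.lookup
           (\<Prod>c<p. tau_poly (rsup r p (c + 1)) (n + int (runner_offset c)) tseq tsseq D) m"
proof -
  let ?f = "\<lambda>l. rho_part r l (n * int p + int i0)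
              * Poly_Mapping.lookup (schur l (dilate p tseq) * schur l (dilate p tsseq)) m"
  have "tau r (n * int p + int i0) (dilate p tseq) (dilate p tsseq) m = infsum ?f {l. is_partition l}"
    by (simp add: tau_def)
  also have "\<dots> = infsum ?f balanced"
    using coeff_schur_dilate_eq_0_if_not_balanced[OF m D]
    by (intro infsum_cong_neutral) (auto simp: balanced_def partitions_len_le_def)
  also have "\<dots> = infsum (\<lambda>mu. ?f (glue mu)) (PiE {..<p} (\<lambda>_. partitions_len_le K))"
    by (rule infsum_reindex_bij_betw[OF bij_betw_glue, symmetric])
  also have "\<dots> = infsum (\<lambda>mu. (\<Prod>c<p. rho_part (rsup r p (c + 1)) (mu c) (n + int (runner_offset c)))
                   * Poly_Mapping.lookup (\<Prod>c<p. schur (mu c) tseq * schur (mu c) tsseq) m)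
      (PiE {..<p} (\<lambda>_. partitions_len_le K))"
  proof (rule infsum_cong)
    fix mu assume "mu \<in> PiE {..<p} (\<lambda>_. partitions_len_le K)"
    then have mu: "\<And>c. c < p \<Longrightarrow> mu c \<in> partitions_len_le K"
      by auto
    show "?f (glue mu) = (\<Prod>c<p. rho_part (rsup r p (c + 1)) (mu c) (n + int (runner_offset c)))
        * Poly_Mapping.lookup (\<Prod>c<p. schur (mu c) tseq * schur (mu c) tsseq) m"
      using rho_part_glue[of mu, OF mu] schur_dilate_glue[of mu, OF mu]
      by (simp add: prod.distrib)
  qed
  also have "\<dots> = Poly_Mapping.lookup
      (\<Prod>c<p. tau_poly (rsup r p (c + 1)) (n + int (runner_offset c)) tseq tsseq D) m"
    by (rule lookup_prod_tau_poly_eq_infsum[OF graded_tseq graded_tsseq m D, symmetric])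
  finally show ?thesis .
qed

end

theorem mainTheorem3:
  fixes r :: "int \<Rightarrow> complex" and p :: nat and n :: int and i :: nat
  assumes "1 \<le> p" and "1 \<le> i" and "i \<le> p"
  shows "tau r (n * int p + int i) (dilate p tseq) (dilate p tsseq)
       = ser_mult (ser_prod (\<lambda>m. tau (rsup r p m) (n + 1) tseq tsseq) [1..<i+1])
                  (ser_prod (\<lambda>m. tau (rsup r p m) n tseq tsseq) [i+1..<p+1])"
proof
  fix m
  define D where "D = wdeg var_weight m"
  (* only partitions of size at most D, hence with at most D parts, affect the coefficient of m *)
  interpret abacus p "D + 1" i
    using assms by unfold_locales auto
  let ?P = "\<lambda>N j. tau_poly (rsup r p j) N tseq tsseq D"
  have "agrees_upto var_weight (2 * D)
      (ser_mult (ser_prod (\<lambda>j. tau (rsup r p j) (n + 1) tseq tsseq) [1..<i+1])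
                (ser_prod (\<lambda>j. tau (rsup r p j) n tseq tsseq) [i+1..<p+1]))
      (prod_list (map (?P (n + 1)) [1..<i+1]) * prod_list (map (?P n) [i+1..<p+1]))"
    by (intro agrees_upto_ser_mult ser_prod_tau_agrees_upto graded_tseq graded_tsseq)
  moreover have "prod_list (map (?P (n + 1)) [1..<i+1]) * prod_list (map (?P n) [i+1..<p+1])
      = (\<Prod>c<p. ?P (n + int (runner_offset c)) (c + 1))"
    unfolding prod_list_upt_split[OF assms(3)] by (intro prod.cong) (auto simp: runner_offset_def)
  ultimately show "tau r (n * int p + int i) (dilate p tseq) (dilate p tsseq) m
      = ser_mult (ser_prod (\<lambda>j. tau (rsup r p j) (n + 1) tseq tsseq) [1..<i+1])
                 (ser_prod (\<lambda>j. tau (rsup r p j) n tseq tsseq) [i+1..<p+1]) m"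
    using coeff_tau_dilate[of m D] by (simp add: agrees_upto_def D_def)
qed

end
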